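(* Let $W$ be a neat, upward-restricted layered wheel. Then there is a constant $c$ (depending on $W$) such that every $n$-vertex induced subgraph of $W$ with $n\ge 2$ has treewidth at most $c\log n$; that is, the $n$-vertex induced subgraphs of $W$ have treewidth $O(\log n)$.
   Context: A layered wheel is a countably infinite graph $W$ on the same vertex set as a countably infinite, locally finite rooted tree $T$ embedded in the plane, such that: (1) for every natural number $n$, the set $L_n$ of nodes at distance $n$ from the root of $T$ induces in $W$ a finite path visiting the nodes of $L_n$ in the left-to-right order of the planar embedding of $T$; the edges with both endpoints in a common layer $L_n$ are the layer edges, forming the set $E_L$; (2) every edge of $W$ not in $E_L$ joins a pair of nodes in ancestor–descendant relation in $T$; (3) there is a finite bound on the length of paths in $T$ consisting only of nodes of degree $2$ in $T$. A node is its own ancestor and descendant. $W$ is neat if $T$ has no leaf. $W$ is upward-restricted if there is an integer $t$ such that for every node $v$ of $T$ there is a set $X_v$ of at most $t$ ancestors of $v$ such that in $W-E_L$ every edge with exactly one endpoint among the descendants of $v$ has its other endpoint in $X_v$. *)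

theory Defs
  imports Complex_Main "HOL-Library.Countable_Set"
begin

text \<open>The planar embedding is given by a left-to-right order slt on the children of each node.\<close>

definition rooted_tree :: "'a set \<Rightarrow> 'a \<Rightarrow> ('a \<Rightarrow> 'a) \<Rightarrow> bool" where
  "rooted_tree V r par \<longleftrightarrow> r \<in> V \<and> (\<forall>v\<in>V. v \<noteq> r \<longrightarrow> par v \<in> V)
     \<and> (\<forall>v\<in>V. \<exists>k. (par ^^ k) v = r)"

definition depth :: "'a \<Rightarrow> ('a \<Rightarrow> 'a) \<Rightarrow> 'a \<Rightarrow> nat" where
  "depth r par v = (LEAST k. (par ^^ k) v = r)"

definition layer :: "'a set \<Rightarrow> 'a \<Rightarrow> ('a \<Rightarrow> 'a) \<Rightarrow> nat \<Rightarrow> 'a set" where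
  "layer V r par n = {v \<in> V. depth r par v = n}"

definition children :: "'a set \<Rightarrow> 'a \<Rightarrow> ('a \<Rightarrow> 'a) \<Rightarrow> 'a \<Rightarrow> 'a set" where
  "children V r par v = {w \<in> V. w \<noteq> r \<and> par w = v}"

text \<open>u is an ancestor of v (every node is its own ancestor).\<close>
definition ancestor :: "'a set \<Rightarrow> 'a \<Rightarrow> ('a \<Rightarrow> 'a) \<Rightarrow> 'a \<Rightarrow> 'a \<Rightarrow> bool" where
  "ancestor V r par u v \<longleftrightarrow> u \<in> V \<and> v \<in> V \<and> (\<exists>k \<le> depth r par v. (par ^^ k) v = u)"

definition tadj :: "'a set \<Rightarrow> 'a \<Rightarrow> ('a \<Rightarrow> 'a) \<Rightarrow> 'a \<Rightarrow> 'a \<Rightarrow> bool" where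
  "tadj V r par u v \<longleftrightarrow> u \<in> V \<and> v \<in> V \<and> ((u \<noteq> r \<and> par u = v) \<or> (v \<noteq> r \<and> par v = u))"

definition tdegree :: "'a set \<Rightarrow> 'a \<Rightarrow> ('a \<Rightarrow> 'a) \<Rightarrow> 'a \<Rightarrow> nat" where
  "tdegree V r par v = card (children V r par v) + (if v = r then 0 else 1)"

definition tpath :: "'a set \<Rightarrow> 'a \<Rightarrow> ('a \<Rightarrow> 'a) \<Rightarrow> 'a list \<Rightarrow> bool" where
  "tpath V r par xs \<longleftrightarrow> xs \<noteq> [] \<and> distinct xs \<and> set xs \<subseteq> V \<and>
     (\<forall>i. Suc i < length xs \<longrightarrow> tadj V r par (xs ! i) (xs ! Suc i))"

definition planar_embedding :: "'a set \<Rightarrow> 'a \<Rightarrow> ('a \<Rightarrow> 'a) \<Rightarrow> ('a \<Rightarrow> 'a \<Rightarrow> bool) \<Rightarrow> bool" where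
  "planar_embedding V r par slt \<longleftrightarrow> (\<forall>v\<in>V. strict_linear_order_on (children V r par v)
      {(a, b). a \<in> children V r par v \<and> b \<in> children V r par v \<and> slt a b})"

text \<open>Left-to-right order of two nodes of a common layer induced by the embedding:
  compare the (sibling) ancestors at the point where the root paths diverge.\<close>
definition left_of :: "'a \<Rightarrow> ('a \<Rightarrow> 'a) \<Rightarrow> ('a \<Rightarrow> 'a \<Rightarrow> bool) \<Rightarrow> 'a \<Rightarrow> 'a \<Rightarrow> bool" where
  "left_of r par slt u v \<longleftrightarrow> depth r par u = depth r par v \<and>
     (\<exists>k < depth r par u. (par ^^ k) u \<noteq> (par ^^ k) v \<and>
        par ((par ^^ k) u) = par ((par ^^ k) v) \<and> slt ((par ^^ k) u) ((par ^^ k) v))"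

definition layered_wheel :: "'a set \<Rightarrow> 'a \<Rightarrow> ('a \<Rightarrow> 'a) \<Rightarrow> ('a \<Rightarrow> 'a \<Rightarrow> bool)
    \<Rightarrow> ('a \<Rightarrow> 'a \<Rightarrow> bool) \<Rightarrow> bool" where
  "layered_wheel V r par slt E \<longleftrightarrow>
     rooted_tree V r par \<and> infinite V \<and> countable V
     \<and> (\<forall>v\<in>V. finite (children V r par v))
     \<and> planar_embedding V r par slt
     \<and> (\<forall>u v. E u v \<longrightarrow> u \<in> V \<and> v \<in> V \<and> u \<noteq> v \<and> E v u)
     \<comment> \<open>(1) each layer induces the path following the left-to-right order\<close>
     \<and> (\<forall>n. \<forall>u\<in>layer V r par n. \<forall>v\<in>layer V r par n. u \<noteq> v \<longrightarrow>
          (E u v \<longleftrightarrow>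
            ((left_of r par slt u v \<and> \<not> (\<exists>w\<in>layer V r par n. left_of r par slt u w \<and> left_of r par slt w v))
           \<or> (left_of r par slt v u \<and> \<not> (\<exists>w\<in>layer V r par n. left_of r par slt v w \<and> left_of r par slt w u)))))
     \<comment> \<open>(2) non-layer edges join ancestor-descendant pairs\<close>
     \<and> (\<forall>u v. E u v \<and> depth r par u \<noteq> depth r par v \<longrightarrow>
          ancestor V r par u v \<or> ancestor V r par v u)
     \<comment> \<open>(3) bounded length of paths of degree-2 nodes of T\<close>
     \<and> (\<exists>B::nat. \<forall>xs. tpath V r par xs \<and> (\<forall>x\<in>set xs. tdegree V r par x = 2) \<longrightarrow> length xs \<le> B)"

definition neat :: "'a set \<Rightarrow> 'a \<Rightarrow> ('a \<Rightarrow> 'a) \<Rightarrow> bool" where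
  "neat V r par \<longleftrightarrow> (\<forall>v\<in>V. children V r par v \<noteq> {})"

definition upward_restricted :: "'a set \<Rightarrow> 'a \<Rightarrow> ('a \<Rightarrow> 'a) \<Rightarrow> ('a \<Rightarrow> 'a \<Rightarrow> bool) \<Rightarrow> bool" where
  "upward_restricted V r par E \<longleftrightarrow> (\<exists>t::nat. \<forall>v\<in>V. \<exists>X. finite X \<and> card X \<le> t
      \<and> (\<forall>x\<in>X. ancestor V r par x v)
      \<and> (\<forall>x y. E x y \<and> depth r par x \<noteq> depth r par y
             \<and> ancestor V r par v x \<and> \<not> ancestor V r par v y \<longrightarrow> y \<in> X))"

definition connected_in :: "'n set \<Rightarrow> ('n \<Rightarrow> 'n \<Rightarrow> bool) \<Rightarrow> bool" where
  "connected_in S R \<longleftrightarrow> (\<forall>i\<in>S. \<forall>j\<in>S. (\<lambda>a b. R a b \<and> a \<in> S \<and> b \<in> S)\<^sup>*\<^sup>* i j)"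

definition has_cycle :: "'n set \<Rightarrow> ('n \<Rightarrow> 'n \<Rightarrow> bool) \<Rightarrow> bool" where
  "has_cycle N R \<longleftrightarrow> (\<exists>cs. length cs \<ge> 3 \<and> distinct cs \<and> set cs \<subseteq> N
      \<and> (\<forall>i. Suc i < length cs \<longrightarrow> R (cs ! i) (cs ! Suc i)) \<and> R (last cs) (hd cs))"

definition finite_tree :: "'n set \<Rightarrow> ('n \<Rightarrow> 'n \<Rightarrow> bool) \<Rightarrow> bool" where
  "finite_tree N R \<longleftrightarrow> finite N \<and> N \<noteq> {} \<and> (\<forall>i j. R i j \<longrightarrow> i \<in> N \<and> j \<in> N \<and> i \<noteq> j \<and> R j i)
     \<and> connected_in N R \<and> \<not> has_cycle N R"

definition tree_decomposition :: "'a set \<Rightarrow> ('a \<Rightarrow> 'a \<Rightarrow> bool)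
    \<Rightarrow> nat set \<Rightarrow> (nat \<Rightarrow> nat \<Rightarrow> bool) \<Rightarrow> (nat \<Rightarrow> 'a set) \<Rightarrow> bool" where
  "tree_decomposition S E N R B \<longleftrightarrow> finite_tree N R
     \<and> (\<forall>i\<in>N. B i \<subseteq> S)
     \<and> (\<forall>x\<in>S. \<exists>i\<in>N. x \<in> B i)
     \<and> (\<forall>x\<in>S. \<forall>y\<in>S. E x y \<longrightarrow> (\<exists>i\<in>N. x \<in> B i \<and> y \<in> B i))
     \<and> (\<forall>x\<in>S. connected_in {i \<in> N. x \<in> B i} R)"

definition treewidth_at_most :: "'a set \<Rightarrow> ('a \<Rightarrow> 'a \<Rightarrow> bool) \<Rightarrow> real \<Rightarrow> bool" where
  "treewidth_at_most S E w \<longleftrightarrow> (\<exists>N R B. tree_decomposition S E N R B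
      \<and> (\<forall>i\<in>N. real (card (B i)) - 1 \<le> w))"

end

theory Submission
  imports Defs "HOL-Library.Log_Nat"
begin

text \<open>Fix a set \<open>S\<close> of \<open>n\<close> nodes. Since chains of degree-2 nodes of the tree are short,
  every node has two disjoint subtrees a bounded number \<open>b\<close> of levels below it; halving \<open>S\<close>
  between them \<open>m\<close> times with \<open>2^m > n\<close> shows that every node has, at most \<open>H = O(log n)\<close>
  levels below, a free descendant, i.e. one whose subtree avoids \<open>S\<close>.

  The tree decomposition is built recursively on regions: the vertices of \<open>S\<close> of depth at
  least \<open>d\<close> lying strictly between two free walls at most \<open>H\<close> levels below \<open>d\<close>. An edge
  leaving a region ends on a root path of a wall or is a vertical edge into the subtree of one
  of the (at most two) nodes of depth \<open>d\<close> between the walls; by upward restriction the latter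
  have at most \<open>t\<close> possible ends each. So the boundary of a region has \<open>O(H + t)\<close> vertices.
  If three or more nodes of depth \<open>d + 1\<close> lie between the walls, a free node below the middle
  one splits the region in two; otherwise the region moves one level down. Every bag is a
  boundary plus \<open>O(H)\<close> vertices, so the width is \<open>O(log n)\<close>.\<close>

section \<open>Rooted tree decompositions\<close>

lemma connected_in_if_reach:
  assumes sym: "\<And>a b. R a b \<Longrightarrow> R b a"
    and reach: "\<And>i. i \<in> S \<Longrightarrow> (\<lambda>a b. R a b \<and> a \<in> S \<and> b \<in> S)\<^sup>*\<^sup>* i z"
  shows "connected_in S R"
  unfolding connected_in_def
proof (intro ballI)
  let ?Q = "\<lambda>a b. R a b \<and> a \<in> S \<and> b \<in> S"
  fix i j assume "i \<in> S" "j \<in> S"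
  have "?Q\<^sup>*\<^sup>* z j"
    using reach[OF \<open>j \<in> S\<close>]
    by (induction rule: rtranclp_induct) (auto intro: converse_rtranclp_into_rtranclp sym)
  then show "?Q\<^sup>*\<^sup>* i j" using reach[OF \<open>i \<in> S\<close>] by (rule rtranclp_trans[rotated])
qed

lemma has_cycle_cyclic:
  assumes "has_cycle N R"
  obtains cs where "3 \<le> length cs" "distinct cs"
    "\<And>k. k < length cs \<Longrightarrow> R (cs ! k) (cs ! ((k + 1) mod length cs))"
proof -
  obtain cs where cs: "length cs \<ge> 3" "distinct cs"
      "\<forall>i. Suc i < length cs \<longrightarrow> R (cs ! i) (cs ! Suc i)" "R (last cs) (hd cs)"
    using assms unfolding has_cycle_def by blast
  have "R (cs ! k) (cs ! ((k + 1) mod length cs))" if "k < length cs" for k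
  proof (cases "Suc k < length cs")
    case True
    then show ?thesis using cs(3) by simp
  next
    case False
    then have "Suc k = length cs" using that by simp
    then have "k = length cs - 1" "(k + 1) mod length cs = 0" by auto
    moreover have "cs \<noteq> []" using cs(1) by auto
    then have "last cs = cs ! (length cs - 1)" "hd cs = cs ! 0"
      by (simp_all add: last_conv_nth hd_conv_nth)
    ultimately show ?thesis using cs(4) by simp
  qed
  then show ?thesis using that cs(1,2) by blast
qed

lemma has_cycle_local_max:
  fixes f :: "'n \<Rightarrow> 'b::linorder"
  assumes "has_cycle N R" and sym: "\<And>a b. R a b \<Longrightarrow> R b a"
  shows "\<exists>x y z. R x y \<and> R x z \<and> y \<noteq> z \<and> f y \<le> f x \<and> f z \<le> f x"
proof -
  obtain cs where cs: "3 \<le> length cs" "distinct cs"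
    and step: "\<And>k. k < length cs \<Longrightarrow> R (cs ! k) (cs ! ((k + 1) mod length cs))"
    using has_cycle_cyclic[OF assms(1)] by blast
  define L where "L = length cs"
  obtain m where m: "m < L" "\<forall>k<L. f (cs ! k) \<le> f (cs ! m)"
  proof -
    have "Max (f ` set cs) \<in> f ` set cs" using cs(1) by (intro Max_in) auto
    then obtain m where "m < L" "f (cs ! m) = Max (f ` set cs)"
      unfolding L_def by (auto simp: in_set_conv_nth)
    then show ?thesis using that L_def by simp
  qed
  define a where "a = (m + 1) mod L"
  define b where "b = (if m = 0 then L - 1 else m - 1)"
  have ab: "a < L" "b < L" "a \<noteq> b" "(b + 1) mod L = m"
    using cs(1) m(1) unfolding a_def b_def L_def by (auto simp: mod_Suc)
  have "R (cs ! m) (cs ! a)" using step m(1) a_def L_def by simp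
  moreover have "R (cs ! m) (cs ! b)" using step[of b] ab(2,4) sym L_def by simp
  moreover have "cs ! a \<noteq> cs ! b" using cs(2) ab L_def by (simp add: nth_eq_iff_index_eq)
  ultimately show ?thesis using m(2) ab(1,2) by blast
qed

text \<open>A rooted decomposition lives on a prefix-closed set of lists, the parent of a node being
  its \<^term>\<open>butlast\<close>. The nodes whose bags contain a vertex are connected exactly when the vertex
  has a unique top node, i.e. a node whose parent bag does not contain it.\<close>

definition top_node :: "nat list set \<Rightarrow> (nat list \<Rightarrow> 'a set) \<Rightarrow> 'a \<Rightarrow> nat list \<Rightarrow> bool" where
  "top_node N B x i \<longleftrightarrow> i \<in> N \<and> x \<in> B i \<and> (i = [] \<or> x \<notin> B (butlast i))"

definition rooted_decomposition ::
    "('a \<Rightarrow> 'a \<Rightarrow> bool) \<Rightarrow> 'a set \<Rightarrow> nat list set \<Rightarrow> (nat list \<Rightarrow> 'a set) \<Rightarrow> bool" where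
  "rooted_decomposition E A N B \<longleftrightarrow> finite N \<and> [] \<in> N \<and> (\<forall>i\<in>N. butlast i \<in> N)
     \<and> (\<forall>i\<in>N. B i \<subseteq> A) \<and> (\<forall>x\<in>A. \<exists>i\<in>N. x \<in> B i)
     \<and> (\<forall>x\<in>A. \<forall>y\<in>A. E x y \<longrightarrow> (\<exists>i\<in>N. x \<in> B i \<and> y \<in> B i))
     \<and> (\<forall>x i j. top_node N B x i \<and> top_node N B x j \<longrightarrow> i = j)"

definition rooted_decomposable :: "('a \<Rightarrow> 'a \<Rightarrow> bool) \<Rightarrow> 'a set \<Rightarrow> 'a set \<Rightarrow> nat \<Rightarrow> bool" where
  "rooted_decomposable E A R k \<longleftrightarrow>
     (\<exists>N B. rooted_decomposition E A N B \<and> R \<subseteq> B [] \<and> (\<forall>i\<in>N. card (B i) \<le> k))"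

lemma rooted_decomposable_single:
  assumes "card A \<le> k"
  shows "rooted_decomposable E A A k"
  using assms unfolding rooted_decomposable_def rooted_decomposition_def top_node_def
  by (intro exI[of _ "{[]}"] exI[of _ "\<lambda>_. A"]) auto

lemma top_node_unique_root:
  assumes "rooted_decomposition E A N B" "x \<in> B []" "top_node N B x i"
  shows "i = []"
proof -
  have "top_node N B x []" using assms(1,2) unfolding rooted_decomposition_def top_node_def by blast
  then show ?thesis using assms unfolding rooted_decomposition_def by blast
qed

definition join_nodes :: "nat list set \<Rightarrow> nat list set \<Rightarrow> nat list set" where
  "join_nodes N1 N2 = insert [] (Cons 0 ` N1 \<union> Cons 1 ` N2)"

definition join_bags ::
    "'a set \<Rightarrow> (nat list \<Rightarrow> 'a set) \<Rightarrow> (nat list \<Rightarrow> 'a set) \<Rightarrow> nat list \<Rightarrow> 'a set" where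
  "join_bags R B1 B2 i = (case i of [] \<Rightarrow> R | c # j \<Rightarrow> if c = 0 then B1 j else B2 j)"

lemma top_node_join_iff:
  assumes D1: "rooted_decomposition E A1 N1 B1" and D2: "rooted_decomposition E A2 N2 B2"
    and "A1 \<inter> R \<subseteq> B1 []" "A2 \<inter> R \<subseteq> B2 []"
  shows "top_node (join_nodes N1 N2) (join_bags R B1 B2) x i \<longleftrightarrow> (x \<in> R \<and> i = [])
    \<or> (x \<notin> R \<and> (\<exists>j. (i = 0 # j \<and> top_node N1 B1 x j) \<or> (i = 1 # j \<and> top_node N2 B2 x j)))"
proof -
  let ?top = "top_node (join_nodes N1 N2) (join_bags R B1 B2) x"
  have sub: "\<forall>i\<in>N1. B1 i \<subseteq> A1" "\<forall>i\<in>N2. B2 i \<subseteq> A2"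
    using D1 D2 unfolding rooted_decomposition_def by blast+
  have root1: "j = []" if "top_node N1 B1 x j" "x \<in> R" for j
    using top_node_unique_root[OF D1 _ that(1)] that sub(1) assms(3) unfolding top_node_def by blast
  have root2: "j = []" if "top_node N2 B2 x j" "x \<in> R" for j
    using top_node_unique_root[OF D2 _ that(1)] that sub(2) assms(4) unfolding top_node_def by blast
  have nil: "?top [] \<longleftrightarrow> x \<in> R"
    by (simp add: top_node_def join_nodes_def join_bags_def)
  have zero: "?top (0 # j) \<longleftrightarrow> top_node N1 B1 x j \<and> (j = [] \<longrightarrow> x \<notin> R)" for j
    by (cases "j = []") (auto simp: top_node_def join_nodes_def join_bags_def)
  have one: "?top (1 # j) \<longleftrightarrow> top_node N2 B2 x j \<and> (j = [] \<longrightarrow> x \<notin> R)" for j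
    by (cases "j = []") (auto simp: top_node_def join_nodes_def join_bags_def)
  have other: "\<not> ?top (Suc (Suc c) # j)" for c j
    by (auto simp: top_node_def join_nodes_def)
  show ?thesis
  proof (cases i)
    case (Cons c j)
    consider "c = 0" | "c = 1" | c' where "c = Suc (Suc c')"
      by (metis One_nat_def not0_implies_Suc)
    then show ?thesis
      by cases (use Cons zero one other root1 root2 in auto)
  qed (use nil in simp)
qed

lemma top_node_join_unique:
  assumes D1: "rooted_decomposition E A1 N1 B1" and D2: "rooted_decomposition E A2 N2 B2"
    and R1: "A1 \<inter> R \<subseteq> B1 []" and R2: "A2 \<inter> R \<subseteq> B2 []" and A12: "A1 \<inter> A2 \<subseteq> R"
    and i: "top_node (join_nodes N1 N2) (join_bags R B1 B2) x i"
    and j: "top_node (join_nodes N1 N2) (join_bags R B1 B2) x j"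
  shows "i = j"
proof (cases "x \<in> R")
  case False
  have unique: "\<forall>x i j. top_node N1 B1 x i \<and> top_node N1 B1 x j \<longrightarrow> i = j"
      "\<forall>x i j. top_node N2 B2 x i \<and> top_node N2 B2 x j \<longrightarrow> i = j"
    and sub: "\<forall>i\<in>N1. B1 i \<subseteq> A1" "\<forall>i\<in>N2. B2 i \<subseteq> A2"
    using D1 D2 unfolding rooted_decomposition_def by blast+
  have "\<not> (top_node N1 B1 x i' \<and> top_node N2 B2 x j')" for i' j'
    using False A12 sub unfolding top_node_def by blast
  moreover obtain i' where "(i = 0 # i' \<and> top_node N1 B1 x i') \<or> (i = 1 # i' \<and> top_node N2 B2 x i')"
    using i False unfolding top_node_join_iff[OF D1 D2 R1 R2] by blast
  moreover obtain j' where "(j = 0 # j' \<and> top_node N1 B1 x j') \<or> (j = 1 # j' \<and> top_node N2 B2 x j')"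
    using j False unfolding top_node_join_iff[OF D1 D2 R1 R2] by blast
  ultimately show ?thesis using unique by (elim disjE conjE) blast+
next
  case True
  then show ?thesis using i j unfolding top_node_join_iff[OF D1 D2 R1 R2] by simp
qed

lemma join_nodes_cases:
  assumes "i \<in> join_nodes N1 N2" "P []" "\<And>j. j \<in> N1 \<Longrightarrow> P (0 # j)" "\<And>j. j \<in> N2 \<Longrightarrow> P (1 # j)"
  shows "P i"
  using assms unfolding join_nodes_def by blast

lemma join_bags_simps [simp]:
  "join_bags R B1 B2 [] = R" "join_bags R B1 B2 (0 # i) = B1 i" "join_bags R B1 B2 (Suc 0 # i) = B2 i"
  by (simp_all add: join_bags_def)

lemma join_bags_cover:
  assumes "(x \<in> R \<and> y \<in> R) \<or> (\<exists>i\<in>N1. x \<in> B1 i \<and> y \<in> B1 i) \<or> (\<exists>i\<in>N2. x \<in> B2 i \<and> y \<in> B2 i)"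
  shows "\<exists>i\<in>join_nodes N1 N2. x \<in> join_bags R B1 B2 i \<and> y \<in> join_bags R B1 B2 i"
  using assms
proof (elim disjE bexE conjE)
  show "x \<in> B1 i \<Longrightarrow> y \<in> B1 i \<Longrightarrow> ?thesis" if "i \<in> N1" for i
    using that by (intro bexI[of _ "0 # i"]) (simp_all add: join_nodes_def)
  show "x \<in> B2 i \<Longrightarrow> y \<in> B2 i \<Longrightarrow> ?thesis" if "i \<in> N2" for i
    using that by (intro bexI[of _ "1 # i"]) (simp_all add: join_nodes_def)
qed (intro bexI[of _ "[]"], simp_all add: join_nodes_def)

lemma rooted_decomposition_join:
  assumes D1: "rooted_decomposition E A1 N1 B1" and D2: "rooted_decomposition E A2 N2 B2"
    and R1: "A1 \<inter> R \<subseteq> B1 []" and R2: "A2 \<inter> R \<subseteq> B2 []" and A12: "A1 \<inter> A2 \<subseteq> R"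
    and edges: "\<And>x y. E x y \<Longrightarrow> x \<in> R \<union> A1 \<union> A2 \<Longrightarrow> y \<in> R \<union> A1 \<union> A2 \<Longrightarrow>
      (x \<in> R \<and> y \<in> R) \<or> (x \<in> A1 \<and> y \<in> A1) \<or> (x \<in> A2 \<and> y \<in> A2)"
  shows "rooted_decomposition E (R \<union> A1 \<union> A2) (join_nodes N1 N2) (join_bags R B1 B2)"
proof -
  let ?N = "join_nodes N1 N2" and ?B = "join_bags R B1 B2"
  have fin: "finite N1" "finite N2"
    and closed: "\<forall>i\<in>N1. butlast i \<in> N1" "\<forall>i\<in>N2. butlast i \<in> N2"
    and sub: "\<forall>i\<in>N1. B1 i \<subseteq> A1" "\<forall>i\<in>N2. B2 i \<subseteq> A2"
    and cover: "\<forall>x\<in>A1. \<exists>i\<in>N1. x \<in> B1 i" "\<forall>x\<in>A2. \<exists>i\<in>N2. x \<in> B2 i"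
    and edge: "\<forall>x\<in>A1. \<forall>y\<in>A1. E x y \<longrightarrow> (\<exists>i\<in>N1. x \<in> B1 i \<and> y \<in> B1 i)"
      "\<forall>x\<in>A2. \<forall>y\<in>A2. E x y \<longrightarrow> (\<exists>i\<in>N2. x \<in> B2 i \<and> y \<in> B2 i)"
    using D1 D2 unfolding rooted_decomposition_def by blast+
  have nodes: "[] \<in> ?N" "i \<in> N1 \<Longrightarrow> 0 # i \<in> ?N" "i \<in> N2 \<Longrightarrow> 1 # i \<in> ?N" for i
    by (simp_all add: join_nodes_def)
  show ?thesis
    unfolding rooted_decomposition_def
  proof (intro conjI)
    show "finite ?N" "[] \<in> ?N" using fin by (simp_all add: join_nodes_def)
    show "\<forall>i\<in>?N. butlast i \<in> ?N"
    proof
      fix i assume "i \<in> ?N"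
      then show "butlast i \<in> ?N" by (rule join_nodes_cases) (use closed nodes in auto)
    qed
    show "\<forall>i\<in>?N. ?B i \<subseteq> R \<union> A1 \<union> A2"
    proof
      fix i assume "i \<in> ?N"
      then show "?B i \<subseteq> R \<union> A1 \<union> A2" by (rule join_nodes_cases) (use sub in auto)
    qed
    show "\<forall>x\<in>R \<union> A1 \<union> A2. \<exists>i\<in>?N. x \<in> ?B i"
    proof
      fix x assume "x \<in> R \<union> A1 \<union> A2"
      then have "(x \<in> R \<and> x \<in> R) \<or> (\<exists>i\<in>N1. x \<in> B1 i \<and> x \<in> B1 i) \<or> (\<exists>i\<in>N2. x \<in> B2 i \<and> x \<in> B2 i)"
        using cover by blast
      then show "\<exists>i\<in>?N. x \<in> ?B i" using join_bags_cover[of x R x N1 B1 N2 B2] by blast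
    qed
    show "\<forall>x\<in>R \<union> A1 \<union> A2. \<forall>y\<in>R \<union> A1 \<union> A2. E x y \<longrightarrow> (\<exists>i\<in>?N. x \<in> ?B i \<and> y \<in> ?B i)"
    proof (intro ballI impI)
      fix x y assume "x \<in> R \<union> A1 \<union> A2" "y \<in> R \<union> A1 \<union> A2" "E x y"
      show "\<exists>i\<in>?N. x \<in> ?B i \<and> y \<in> ?B i"
        by (rule join_bags_cover) (use edges[of x y] edge \<open>E x y\<close> \<open>x \<in> _\<close> \<open>y \<in> _\<close> in blast)
    qed
    show "\<forall>x i j. top_node ?N ?B x i \<and> top_node ?N ?B x j \<longrightarrow> i = j"
      using top_node_join_unique[OF D1 D2 R1 R2 A12] by blast
  qed
qed

lemma rooted_decomposable_separate:
  assumes sym: "\<And>x y. E x y \<Longrightarrow> E y x"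
    and C: "C = D \<union> C1 \<union> C2" "D \<inter> C1 = {}" "D \<inter> C2 = {}" "C1 \<inter> C2 = {}" "C \<inter> R = {}"
    and R12: "R1 \<subseteq> R \<union> D" "R2 \<subseteq> R \<union> D"
    and out1: "\<And>x y. x \<in> C1 \<Longrightarrow> y \<in> C \<union> R \<Longrightarrow> y \<notin> C1 \<Longrightarrow> E x y \<Longrightarrow> y \<in> R1"
    and out2: "\<And>x y. x \<in> C2 \<Longrightarrow> y \<in> C \<union> R \<Longrightarrow> y \<notin> C2 \<Longrightarrow> E x y \<Longrightarrow> y \<in> R2"
    and D1: "rooted_decomposable E (C1 \<union> R1) R1 k" and D2: "rooted_decomposable E (C2 \<union> R2) R2 k"
    and card: "card (R \<union> D) \<le> k"
  shows "rooted_decomposable E (C \<union> R) R k"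
proof -
  obtain N1 B1 where N1: "rooted_decomposition E (C1 \<union> R1) N1 B1" "R1 \<subseteq> B1 []"
      "\<forall>i\<in>N1. card (B1 i) \<le> k"
    using D1 unfolding rooted_decomposable_def by blast
  obtain N2 B2 where N2: "rooted_decomposition E (C2 \<union> R2) N2 B2" "R2 \<subseteq> B2 []"
      "\<forall>i\<in>N2. card (B2 i) \<le> k"
    using D2 unfolding rooted_decomposable_def by blast
  have union: "(R \<union> D) \<union> (C1 \<union> R1) \<union> (C2 \<union> R2) = C \<union> R" using C R12 by blast
  have "rooted_decomposition E ((R \<union> D) \<union> (C1 \<union> R1) \<union> (C2 \<union> R2))
      (join_nodes N1 N2) (join_bags (R \<union> D) B1 B2)"
  proof (rule rooted_decomposition_join[OF N1(1) N2(1)])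
    show "(C1 \<union> R1) \<inter> (R \<union> D) \<subseteq> B1 []" "(C2 \<union> R2) \<inter> (R \<union> D) \<subseteq> B2 []"
      using C N1(2) N2(2) by blast+
    show "(C1 \<union> R1) \<inter> (C2 \<union> R2) \<subseteq> R \<union> D" using C R12 by blast
    fix x y assume "E x y" "x \<in> (R \<union> D) \<union> (C1 \<union> R1) \<union> (C2 \<union> R2)"
      "y \<in> (R \<union> D) \<union> (C1 \<union> R1) \<union> (C2 \<union> R2)"
    then have "E y x" "x \<in> C \<union> R" "y \<in> C \<union> R" using sym union by auto
    then show "(x \<in> R \<union> D \<and> y \<in> R \<union> D) \<or> (x \<in> C1 \<union> R1 \<and> y \<in> C1 \<union> R1)
        \<or> (x \<in> C2 \<union> R2 \<and> y \<in> C2 \<union> R2)"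
    proof (cases "x \<in> C1 \<or> y \<in> C1")
      case True
      then show ?thesis using out1 \<open>E x y\<close> \<open>E y x\<close> \<open>x \<in> C \<union> R\<close> \<open>y \<in> C \<union> R\<close> by blast
    next
      case not1: False
      show ?thesis
      proof (cases "x \<in> C2 \<or> y \<in> C2")
        case True
        then show ?thesis using out2 \<open>E x y\<close> \<open>E y x\<close> \<open>x \<in> C \<union> R\<close> \<open>y \<in> C \<union> R\<close> by blast
      next
        case False
        then show ?thesis using not1 \<open>x \<in> C \<union> R\<close> \<open>y \<in> C \<union> R\<close> C(1) by blast
      qed
    qed
  qed
  moreover have "\<forall>i\<in>join_nodes N1 N2. card (join_bags (R \<union> D) B1 B2 i) \<le> k"
    using card N1(3) N2(3) by (auto simp: join_nodes_def join_bags_def)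
  moreover have "R \<subseteq> join_bags (R \<union> D) B1 B2 []" by (simp add: join_bags_def)
  ultimately show ?thesis
    unfolding rooted_decomposable_def union by blast
qed

definition parent_adj :: "nat list \<Rightarrow> nat list \<Rightarrow> bool" where
  "parent_adj xs ys \<longleftrightarrow> (xs \<noteq> [] \<and> butlast xs = ys) \<or> (ys \<noteq> [] \<and> butlast ys = xs)"

text \<open>The tree of a rooted decomposition, with its nodes encoded as natural numbers as
  \<^const>\<open>tree_decomposition\<close> requires.\<close>

definition list_tree_adj :: "nat list set \<Rightarrow> nat \<Rightarrow> nat \<Rightarrow> bool" where
  "list_tree_adj N i j \<longleftrightarrow> i \<in> to_nat ` N \<and> j \<in> to_nat ` N \<and> parent_adj (from_nat i) (from_nat j)"

lemma parent_adj_shorter: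
  assumes "parent_adj xs ys" "length ys \<le> length xs"
  shows "ys = butlast xs"
proof -
  from assms(1) show ?thesis
    unfolding parent_adj_def
  proof (elim disjE conjE)
    assume "ys \<noteq> []" "butlast ys = xs"
    then have "length xs < length ys" by auto
    then show ?thesis using assms(2) by simp
  qed simp
qed

lemma list_tree_adj_sym: "list_tree_adj N i j \<Longrightarrow> list_tree_adj N j i"
  unfolding list_tree_adj_def parent_adj_def by blast

lemma list_tree_walk_up:
  assumes "xs \<in> M" "M \<subseteq> N"
    and up: "\<And>ys. ys \<in> M \<Longrightarrow> \<not> P ys \<Longrightarrow> ys \<noteq> [] \<and> butlast ys \<in> M"
  shows "\<exists>zs\<in>M. P zs \<and>
    (\<lambda>a b. list_tree_adj N a b \<and> a \<in> to_nat ` M \<and> b \<in> to_nat ` M)\<^sup>*\<^sup>* (to_nat xs) (to_nat zs)"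
  using assms(1)
proof (induction "length xs" arbitrary: xs)
  case 0
  then show ?case using up by fastforce
next
  case (Suc n)
  show ?case
  proof (cases "P xs")
    case False
    then have xs: "xs \<noteq> []" "butlast xs \<in> M" using up Suc.prems by blast+
    moreover have "n = length (butlast xs)" using Suc.hyps(2) by simp
    ultimately obtain zs where zs: "zs \<in> M" "P zs"
      "(\<lambda>a b. list_tree_adj N a b \<and> a \<in> to_nat ` M \<and> b \<in> to_nat ` M)\<^sup>*\<^sup>* (to_nat (butlast xs)) (to_nat zs)"
      using Suc.hyps(1) by blast
    have "list_tree_adj N (to_nat xs) (to_nat (butlast xs))"
      using xs Suc.prems \<open>M \<subseteq> N\<close> unfolding list_tree_adj_def parent_adj_def by auto
    then show ?thesis
      using zs xs Suc.prems by (blast intro: converse_rtranclp_into_rtranclp)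
  qed (use Suc.prems in blast)
qed

lemma connected_in_list_tree:
  assumes "M \<subseteq> N"
    and up: "\<And>ys. ys \<in> M \<Longrightarrow> \<not> P ys \<Longrightarrow> ys \<noteq> [] \<and> butlast ys \<in> M"
    and unique: "\<And>ys zs. ys \<in> M \<Longrightarrow> zs \<in> M \<Longrightarrow> P ys \<Longrightarrow> P zs \<Longrightarrow> ys = zs"
  shows "connected_in (to_nat ` M) (list_tree_adj N)"
proof (cases "M = {}")
  case False
  then obtain z where z: "z \<in> M" "P z" using list_tree_walk_up[OF _ assms(1,2)] by blast
  show ?thesis
  proof (rule connected_in_if_reach[OF list_tree_adj_sym])
    fix i assume "i \<in> to_nat ` M"
    then obtain xs where xs: "xs \<in> M" "i = to_nat xs" by blast
    obtain zs where zs: "zs \<in> M" "P zs"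
      "(\<lambda>a b. list_tree_adj N a b \<and> a \<in> to_nat ` M \<and> b \<in> to_nat ` M)\<^sup>*\<^sup>* i (to_nat zs)"
      using list_tree_walk_up[OF xs(1) assms(1,2)] unfolding xs(2) by blast
    moreover have "zs = z" using unique zs(1,2) z by blast
    ultimately show "(\<lambda>a b. list_tree_adj N a b \<and> a \<in> to_nat ` M \<and> b \<in> to_nat ` M)\<^sup>*\<^sup>* i (to_nat z)"
      by simp
  qed
qed (simp add: connected_in_def)

lemma list_tree_acyclic: "\<not> has_cycle (to_nat ` N) (list_tree_adj N)"
proof
  assume "has_cycle (to_nat ` N) (list_tree_adj N)"
  from has_cycle_local_max[OF this list_tree_adj_sym, where f = "\<lambda>i. length (from_nat i :: nat list)"]
  obtain i j j' where adj: "list_tree_adj N i j" "list_tree_adj N i j'" "j \<noteq> j'"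
    and le: "length (from_nat j :: nat list) \<le> length (from_nat i :: nat list)"
      "length (from_nat j' :: nat list) \<le> length (from_nat i :: nat list)"
    by blast
  have "from_nat j = butlast (from_nat i :: nat list)" "from_nat j' = butlast (from_nat i :: nat list)"
    using adj le parent_adj_shorter unfolding list_tree_adj_def by blast+
  moreover have "j = to_nat (from_nat j :: nat list)" "j' = to_nat (from_nat j' :: nat list)"
    using adj unfolding list_tree_adj_def by auto
  ultimately show False using adj(3) by metis
qed

lemma finite_tree_list_tree:
  assumes "finite N" "[] \<in> N" "\<forall>i\<in>N. butlast i \<in> N"
  shows "finite_tree (to_nat ` N) (list_tree_adj N)"
  unfolding finite_tree_def
proof (intro conjI allI impI)
  show "finite (to_nat ` N)" "to_nat ` N \<noteq> {}" using assms(1,2) by auto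
  show "connected_in (to_nat ` N) (list_tree_adj N)"
    by (rule connected_in_list_tree[where P = "\<lambda>ys. ys = []"]) (use assms(3) in auto)
  show "\<not> has_cycle (to_nat ` N) (list_tree_adj N)" by (rule list_tree_acyclic)
  fix i j assume "list_tree_adj N i j"
  moreover have "butlast xs \<noteq> xs" if "xs \<noteq> []" for xs :: "nat list"
    using that by (metis length_butlast diff_less length_greater_0_conv less_irrefl zero_less_one)
  ultimately show "i \<in> to_nat ` N" "j \<in> to_nat ` N" "i \<noteq> j" "list_tree_adj N j i"
    using list_tree_adj_sym unfolding list_tree_adj_def parent_adj_def by auto
qed

lemma tree_decomposition_of_rooted:
  assumes "rooted_decomposition E A N B"
  shows "tree_decomposition A E (to_nat ` N) (list_tree_adj N) (\<lambda>i. B (from_nat i))"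
proof -
  have fin: "finite N" and root: "[] \<in> N" and closed: "\<forall>i\<in>N. butlast i \<in> N"
    and sub: "\<forall>i\<in>N. B i \<subseteq> A" and cover: "\<forall>x\<in>A. \<exists>i\<in>N. x \<in> B i"
    and edge: "\<forall>x\<in>A. \<forall>y\<in>A. E x y \<longrightarrow> (\<exists>i\<in>N. x \<in> B i \<and> y \<in> B i)"
    and unique: "\<forall>x i j. top_node N B x i \<and> top_node N B x j \<longrightarrow> i = j"
    using assms unfolding rooted_decomposition_def by blast+
  have tree: "finite_tree (to_nat ` N) (list_tree_adj N)"
    using fin root closed by (rule finite_tree_list_tree)
  have "connected_in (to_nat ` {i \<in> N. x \<in> B i}) (list_tree_adj N)" for x
  proof (rule connected_in_list_tree[where P = "top_node N B x"])
    show "\<And>ys. ys \<in> {i \<in> N. x \<in> B i} \<Longrightarrow> \<not> top_node N B x ys \<Longrightarrow>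
        ys \<noteq> [] \<and> butlast ys \<in> {i \<in> N. x \<in> B i}"
      using closed unfolding top_node_def by blast
    show "\<And>ys zs. top_node N B x ys \<Longrightarrow> top_node N B x zs \<Longrightarrow> ys = zs"
      using unique by blast
  qed blast
  moreover have "{i \<in> to_nat ` N. x \<in> B (from_nat i)} = to_nat ` {i \<in> N. x \<in> B i}" for x
    by force
  ultimately have "\<forall>x\<in>A. connected_in {i \<in> to_nat ` N. x \<in> B (from_nat i)} (list_tree_adj N)"
    by simp
  moreover have "\<forall>x\<in>A. \<exists>i\<in>to_nat ` N. x \<in> B (from_nat i)"
    using cover by (metis from_nat_to_nat imageI)
  moreover have "\<forall>x\<in>A. \<forall>y\<in>A. E x y \<longrightarrow> (\<exists>i\<in>to_nat ` N. x \<in> B (from_nat i) \<and> y \<in> B (from_nat i))"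
    using edge by (metis from_nat_to_nat imageI)
  moreover have "\<forall>i\<in>to_nat ` N. B (from_nat i) \<subseteq> A" using sub by auto
  ultimately show ?thesis
    unfolding tree_decomposition_def using tree by blast
qed

lemma treewidth_at_most_if_rooted_decomposable:
  assumes "rooted_decomposable E A R k"
  shows "treewidth_at_most A E (real k - 1)"
proof -
  obtain N B where "rooted_decomposition E A N B" "\<forall>i\<in>N. card (B i) \<le> k"
    using assms unfolding rooted_decomposable_def by blast
  then show ?thesis
    unfolding treewidth_at_most_def using tree_decomposition_of_rooted by fastforce
qed

section \<open>Trees given by parent pointers\<close>

locale parent_tree =
  fixes V :: "'a set" and r :: 'a and par :: "'a \<Rightarrow> 'a"
  assumes rooted: "rooted_tree V r par"
begin

abbreviation "dp \<equiv> depth r par"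
abbreviation "anc \<equiv> ancestor V r par"
abbreviation "ch \<equiv> children V r par"

lemma root_in: "r \<in> V"
  and parent_in: "v \<in> V \<Longrightarrow> v \<noteq> r \<Longrightarrow> par v \<in> V"
  and reaches_root: "v \<in> V \<Longrightarrow> \<exists>k. (par ^^ k) v = r"
  using rooted unfolding rooted_tree_def by blast+

lemma children_iff: "c \<in> ch p \<longleftrightarrow> c \<in> V \<and> c \<noteq> r \<and> par c = p"
  unfolding children_def by auto

lemma funpow_depth: "v \<in> V \<Longrightarrow> (par ^^ dp v) v = r"
  unfolding depth_def using reaches_root by (metis (mono_tags, lifting) LeastI_ex)

lemma depth_le: "(par ^^ k) v = r \<Longrightarrow> dp v \<le> k"
  unfolding depth_def by (rule Least_le)

lemma funpow_in: "v \<in> V \<Longrightarrow> k \<le> dp v \<Longrightarrow> (par ^^ k) v \<in> V"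
proof (induction k)
  case (Suc k)
  then have "(par ^^ k) v \<in> V" "(par ^^ k) v \<noteq> r" using depth_le by fastforce+
  then show ?case using parent_in by simp
qed simp

lemma depth_funpow: "v \<in> V \<Longrightarrow> k \<le> dp v \<Longrightarrow> dp ((par ^^ k) v) = dp v - k"
proof -
  assume v: "v \<in> V" "k \<le> dp v"
  let ?w = "(par ^^ k) v"
  have "(par ^^ (dp v - k)) ?w = r" using funpow_depth[OF v(1)] v(2)
    by (metis funpow_add le_add_diff_inverse2 o_apply)
  then have "dp ?w \<le> dp v - k" by (rule depth_le)
  moreover have "(par ^^ (dp ?w + k)) v = r" using funpow_depth[OF funpow_in[OF v]] by (simp add: funpow_add)
  then have "dp v \<le> dp ?w + k" by (rule depth_le)
  ultimately show ?thesis by simp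
qed

lemma depth_root: "dp r = 0"
  using depth_le[of 0 r] by simp

lemma depth_eq_0: "v \<in> V \<Longrightarrow> dp v = 0 \<Longrightarrow> v = r"
  using funpow_depth by fastforce

lemma depth_parent: "v \<in> V \<Longrightarrow> v \<noteq> r \<Longrightarrow> dp (par v) = dp v - 1 \<and> 0 < dp v"
  using depth_funpow[of v 1] depth_eq_0 by fastforce

lemma ancestor_iff: "anc u v \<longleftrightarrow> u \<in> V \<and> v \<in> V \<and> dp u \<le> dp v \<and> u = (par ^^ (dp v - dp u)) v"
proof
  assume "anc u v"
  then obtain k where k: "u \<in> V" "v \<in> V" "k \<le> dp v" "(par ^^ k) v = u"
    unfolding ancestor_def by blast
  then have "dp u = dp v - k" using depth_funpow by blast
  then show "u \<in> V \<and> v \<in> V \<and> dp u \<le> dp v \<and> u = (par ^^ (dp v - dp u)) v" using k by auto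
next
  assume "u \<in> V \<and> v \<in> V \<and> dp u \<le> dp v \<and> u = (par ^^ (dp v - dp u)) v"
  then show "anc u v" unfolding ancestor_def by (intro conjI exI[of _ "dp v - dp u"]) auto
qed

lemma ancestor_in: "anc u v \<Longrightarrow> u \<in> V \<and> v \<in> V"
  unfolding ancestor_def by blast

lemma ancestor_refl: "v \<in> V \<Longrightarrow> anc v v"
  unfolding ancestor_def by (intro conjI exI[of _ 0]) auto

lemma ancestor_depth_le: "anc u v \<Longrightarrow> dp u \<le> dp v"
  using ancestor_iff by blast

lemma ancestor_depth_eq: "anc u v \<Longrightarrow> dp u = dp v \<Longrightarrow> u = v"
  using ancestor_iff by auto

lemma ancestor_trans: "anc u v \<Longrightarrow> anc v w \<Longrightarrow> anc u w"
proof -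
  assume "anc u v" "anc v w"
  then have d: "dp u \<le> dp v" "dp v \<le> dp w" and u: "u = (par ^^ (dp v - dp u)) v"
    and v: "v = (par ^^ (dp w - dp v)) w" and in_V: "u \<in> V" "w \<in> V"
    using ancestor_iff by auto
  have "dp w - dp u = (dp v - dp u) + (dp w - dp v)" using d by simp
  then have "u = (par ^^ (dp w - dp u)) w" using u v by (simp add: funpow_add)
  then show ?thesis using ancestor_iff in_V d by auto
qed

lemma ancestor_linear: "anc a w \<Longrightarrow> anc b w \<Longrightarrow> dp a \<le> dp b \<Longrightarrow> anc a b"
proof -
  assume as: "anc a w" "anc b w" "dp a \<le> dp b"
  then have a: "a = (par ^^ (dp w - dp a)) w" and b: "b = (par ^^ (dp w - dp b)) w"
    and d: "dp b \<le> dp w" and in_V: "a \<in> V" "b \<in> V"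
    using ancestor_iff by auto
  have "dp w - dp a = (dp b - dp a) + (dp w - dp b)" using as(3) d by simp
  then have "a = (par ^^ (dp b - dp a)) b" using a b by (simp add: funpow_add)
  then show ?thesis using ancestor_iff in_V as(3) by auto
qed

lemma ancestor_antisym: "anc u v \<Longrightarrow> anc v u \<Longrightarrow> u = v"
  using ancestor_depth_le ancestor_depth_eq by (meson le_antisym)

lemma same_depth_ancestors_eq: "anc a x \<Longrightarrow> anc b x \<Longrightarrow> dp a = dp b \<Longrightarrow> a = b"
  using ancestor_linear ancestor_depth_eq by (metis order_refl)

lemma parent_ancestor: "v \<in> V \<Longrightarrow> v \<noteq> r \<Longrightarrow> anc (par v) v"
  unfolding ancestor_def using depth_parent[of v] parent_in[of v]
  by (intro conjI exI[of _ 1]) auto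

lemma child_ancestor: "c \<in> ch p \<Longrightarrow> anc p c \<and> dp c = Suc (dp p)"
  using parent_ancestor depth_parent unfolding children_iff by fastforce

lemma ancestor_parent_iff: "v \<in> V \<Longrightarrow> v \<noteq> r \<Longrightarrow> anc u v \<longleftrightarrow> u = v \<or> anc u (par v)"
proof
  assume v: "v \<in> V" "v \<noteq> r" and a: "anc u v"
  show "u = v \<or> anc u (par v)"
  proof (cases "u = v")
    case False
    then have "dp u < dp v" using a ancestor_depth_le ancestor_depth_eq by fastforce
    then have "dp u \<le> dp (par v)" using depth_parent v by simp
    then show ?thesis using ancestor_linear[OF a parent_ancestor[OF v]] by simp
  qed simp
qed (use ancestor_refl ancestor_trans parent_ancestor in blast)

definition ancestor_at :: "'a \<Rightarrow> nat \<Rightarrow> 'a" where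
  "ancestor_at v k = (par ^^ (dp v - k)) v"

lemma ancestor_at: "v \<in> V \<Longrightarrow> k \<le> dp v \<Longrightarrow> anc (ancestor_at v k) v \<and> dp (ancestor_at v k) = k"
  unfolding ancestor_at_def ancestor_def using funpow_in depth_funpow
  by (intro conjI exI[of _ "dp v - k"]) auto

lemma ancestor_at_self: "ancestor_at v (dp v) = v"
  unfolding ancestor_at_def by simp

lemma ancestor_eq_ancestor_at: "anc u v \<Longrightarrow> u = ancestor_at v (dp u)"
  unfolding ancestor_at_def using ancestor_iff by blast

lemma parent_ancestor_at: "Suc k \<le> dp v \<Longrightarrow> par (ancestor_at v (Suc k)) = ancestor_at v k"
proof -
  assume "Suc k \<le> dp v"
  then have "dp v - k = Suc (dp v - Suc k)" by simp
  then show ?thesis unfolding ancestor_at_def by simp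
qed

end

locale planar_tree = parent_tree +
  fixes slt :: "'a \<Rightarrow> 'a \<Rightarrow> bool"
  assumes planar: "planar_embedding V r par slt"
begin

lemma slt_trans: "p \<in> V \<Longrightarrow> a \<in> ch p \<Longrightarrow> b \<in> ch p \<Longrightarrow> c \<in> ch p \<Longrightarrow> slt a b \<Longrightarrow> slt b c \<Longrightarrow> slt a c"
  and slt_irrefl: "p \<in> V \<Longrightarrow> a \<in> ch p \<Longrightarrow> \<not> slt a a"
  and slt_total: "p \<in> V \<Longrightarrow> a \<in> ch p \<Longrightarrow> b \<in> ch p \<Longrightarrow> a \<noteq> b \<Longrightarrow> slt a b \<or> slt b a"
  using planar unfolding planar_embedding_def strict_linear_order_on_def trans_def irrefl_def
    total_on_def by blast+

definition siblings :: "'a \<Rightarrow> 'a \<Rightarrow> bool" where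
  "siblings a b \<longleftrightarrow> a \<in> V \<and> b \<in> V \<and> a \<noteq> r \<and> b \<noteq> r \<and> par a = par b \<and> a \<noteq> b"

text \<open>The left-to-right order of the embedding extended to nodes of different depths; on a
  common layer it coincides with \<^const>\<open>left_of\<close> (lemma \<open>left_of_iff_left\<close>).\<close>

definition left :: "'a \<Rightarrow> 'a \<Rightarrow> bool" where
  "left x y \<longleftrightarrow> (\<exists>a b. siblings a b \<and> slt a b \<and> anc a x \<and> anc b y)"

lemma siblings_depth: "siblings a b \<Longrightarrow> dp a = dp b"
proof -
  assume "siblings a b"
  then have "a \<in> V" "a \<noteq> r" "b \<in> V" "b \<noteq> r" "par a = par b" unfolding siblings_def by auto
  then have "dp a - 1 = dp b - 1" "0 < dp a" "0 < dp b"
    using depth_parent[of a] depth_parent[of b] by auto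
  then show ?thesis by linarith
qed

lemma siblings_children: "siblings a b \<Longrightarrow> a \<in> ch (par a) \<and> b \<in> ch (par a) \<and> par a \<in> V"
  unfolding siblings_def children_iff using parent_in by auto

lemma siblings_ancestor_parent: "siblings a b \<Longrightarrow> anc (par a) b"
  unfolding siblings_def using parent_ancestor by simp

lemma siblings_unique:
  assumes "siblings a b" "anc a x" "anc b y" "siblings a' b'" "anc a' x" "anc b' y"
  shows "a = a' \<and> b = b'"
proof -
  have deeper: False
    if s: "siblings a b" "anc a x" "anc b y" and s': "siblings a' b'" "anc a' x" "anc b' y"
      and lt: "dp a < dp a'" for a b a' b'
  proof -
    have a': "a' \<in> V" "a' \<noteq> r" using s'(1) unfolding siblings_def by auto
    then have "anc (par a') x" using parent_ancestor ancestor_trans s'(2) by blast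
    moreover have "dp a \<le> dp (par a')" using depth_parent[OF a'] lt by simp
    ultimately have "anc a (par a')" using ancestor_linear[OF s(2)] by blast
    then have "anc a y" using siblings_ancestor_parent[OF s'(1)] s'(3) ancestor_trans by blast
    then have "a = b" using same_depth_ancestors_eq s(3) siblings_depth[OF s(1)] by blast
    then show False using s(1) unfolding siblings_def by simp
  qed
  have "dp a = dp a'" using deeper[OF assms] deeper[OF assms(4-6) assms(1-3)] by fastforce
  moreover have "dp b = dp b'" using calculation siblings_depth assms(1,4) by simp
  ultimately show ?thesis using same_depth_ancestors_eq assms(2,3,5,6) by blast
qed

lemma left_in: "left x y \<Longrightarrow> x \<in> V \<and> y \<in> V"
  unfolding left_def using ancestor_in by blast

lemma left_not_ancestor: "left x y \<Longrightarrow> \<not> anc x y \<and> \<not> anc y x"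
proof -
  assume "left x y"
  then obtain a b where ab: "siblings a b" "anc a x" "anc b y" unfolding left_def by blast
  then have "dp a = dp b" "a \<noteq> b" using siblings_depth unfolding siblings_def by auto
  then show ?thesis using ab ancestor_trans same_depth_ancestors_eq by blast
qed

lemma left_asym: "left x y \<Longrightarrow> \<not> left y x"
proof
  assume "left x y" "left y x"
  then obtain a b a' b' where ab: "siblings a b" "slt a b" "anc a x" "anc b y"
    and ab': "siblings a' b'" "slt a' b'" "anc a' y" "anc b' x" unfolding left_def by blast
  have "siblings b' a'" using ab'(1) unfolding siblings_def by auto
  then have "slt b a" using siblings_unique[OF ab(1,3,4)] ab' by blast
  then show False using slt_trans slt_irrefl siblings_children[OF ab(1)] ab(2) by blast
qed

lemma left_descendants: "left x y \<Longrightarrow> anc x x' \<Longrightarrow> anc y y' \<Longrightarrow> left x' y'"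
  unfolding left_def using ancestor_trans by blast

lemma left_trans: "left x y \<Longrightarrow> left y z \<Longrightarrow> left x z"
proof -
  assume "left x y" "left y z"
  then obtain a b a' b' where ab: "siblings a b" "slt a b" "anc a x" "anc b y"
    and ab': "siblings a' b'" "slt a' b'" "anc a' y" "anc b' z" unfolding left_def by blast
  consider "dp b = dp a'" | "dp b < dp a'" | "dp a' < dp b" by linarith
  then show "left x z"
  proof cases
    case 1
    then have "b = a'" using same_depth_ancestors_eq ab(4) ab'(3) by blast
    then have "b' \<in> ch (par a)" "par a = par b'"
      using siblings_children[OF ab'(1)] ab(1) ab'(1) unfolding siblings_def by auto
    moreover have "slt a b'"
      using slt_trans siblings_children[OF ab(1)] ab(2) ab'(2) \<open>b = a'\<close> calculation(1) by blast
    moreover have "a \<noteq> b'" using calculation(3) slt_irrefl siblings_children[OF ab(1)] by blast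
    ultimately have "siblings a b'"
      using ab(1) ab'(1) unfolding siblings_def by simp
    then show ?thesis unfolding left_def using \<open>slt a b'\<close> ab(3) ab'(4) by blast
  next
    case 2
    have a': "a' \<in> V" "a' \<noteq> r" using ab'(1) unfolding siblings_def by auto
    have "anc b a'" using ancestor_linear[OF ab(4) ab'(3)] 2 by simp
    moreover have "dp b \<le> dp (par a')" using depth_parent[OF a'] 2 by simp
    ultimately have "anc b (par a')" using ancestor_linear parent_ancestor[OF a'] by blast
    then have "anc b z" using siblings_ancestor_parent[OF ab'(1)] ab'(4) ancestor_trans by blast
    then show ?thesis unfolding left_def using ab by blast
  next
    case 3
    have b: "b \<in> V" "b \<noteq> r" "par b = par a" using ab(1) unfolding siblings_def by auto
    have "anc a' b" using ancestor_linear[OF ab'(3) ab(4)] 3 by simp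
    moreover have "dp a' \<le> dp (par b)" using depth_parent[OF b(1,2)] 3 by simp
    ultimately have "anc a' (par a)" using ancestor_linear parent_ancestor[OF b(1,2)] b(3) by metis
    moreover have "anc (par a) a" using ab(1) parent_ancestor unfolding siblings_def by blast
    ultimately have "anc a' x" using ab(3) ancestor_trans by blast
    then show ?thesis unfolding left_def using ab' by blast
  qed
qed

lemma left_if_ancestors_diverge:
  assumes xy: "x \<in> V" "y \<in> V" and k: "Suc j \<le> min (dp x) (dp y)"
    and same: "ancestor_at x j = ancestor_at y j"
    and diff: "ancestor_at x (Suc j) \<noteq> ancestor_at y (Suc j)"
  shows "left x y \<or> left y x"
proof -
  let ?a = "ancestor_at x (Suc j)" and ?b = "ancestor_at y (Suc j)"
  have ab: "anc ?a x" "dp ?a = Suc j" "anc ?b y" "dp ?b = Suc j"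
    using ancestor_at xy k by auto
  have "par ?a = par ?b" using parent_ancestor_at k same by simp
  moreover have "?a \<noteq> r" "?b \<noteq> r" using ab depth_root by auto
  ultimately have "siblings ?a ?b" "siblings ?b ?a"
    using ab ancestor_in diff unfolding siblings_def by auto
  moreover have "slt ?a ?b \<or> slt ?b ?a"
    using slt_total[OF _ _ _ diff] siblings_children[OF calculation(1)] by blast
  ultimately show ?thesis unfolding left_def using ab by blast
qed

lemma ancestor_or_left: "x \<in> V \<Longrightarrow> y \<in> V \<Longrightarrow> anc x y \<or> anc y x \<or> left x y \<or> left y x"
proof -
  assume xy: "x \<in> V" "y \<in> V"
  show ?thesis
  proof (cases "\<exists>k \<le> min (dp x) (dp y). ancestor_at x k \<noteq> ancestor_at y k")
    case False
    show ?thesis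
    proof (cases "dp x \<le> dp y")
      case True
      then have "ancestor_at y (dp x) = x" using False ancestor_at_self[of x] by force
      then show ?thesis using ancestor_at[OF xy(2) True] by simp
    next
      case le: False
      then have "ancestor_at x (dp y) = y" using False ancestor_at_self[of y] by force
      then show ?thesis using ancestor_at[OF xy(1), of "dp y"] le by simp
    qed
  next
    case True
    define k where "k = (LEAST k. k \<le> min (dp x) (dp y) \<and> ancestor_at x k \<noteq> ancestor_at y k)"
    have k: "k \<le> min (dp x) (dp y)" "ancestor_at x k \<noteq> ancestor_at y k"
      using LeastI_ex[OF True] unfolding k_def by blast+
    have "k \<noteq> 0"
    proof
      assume "k = 0"
      then have "ancestor_at x k = r" "ancestor_at y k = r"
        using ancestor_at xy depth_eq_0 ancestor_in by (metis le0)+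
      then show False using k(2) by simp
    qed
    then obtain j where j: "k = Suc j" using not0_implies_Suc by blast
    have "ancestor_at x j = ancestor_at y j"
    proof (rule ccontr)
      assume "ancestor_at x j \<noteq> ancestor_at y j"
      then have "k \<le> j" unfolding k_def using k(1) j by (intro Least_le) simp
      then show False using j by simp
    qed
    then show ?thesis using left_if_ancestors_diverge xy k j by blast
  qed
qed

lemma left_of_iff_left:
  assumes "x \<in> V" "y \<in> V" "dp x = dp y"
  shows "left_of r par slt x y \<longleftrightarrow> left x y"
proof
  assume "left_of r par slt x y"
  then obtain k where k: "k < dp x" "(par ^^ k) x \<noteq> (par ^^ k) y"
    "par ((par ^^ k) x) = par ((par ^^ k) y)" "slt ((par ^^ k) x) ((par ^^ k) y)"
    unfolding left_of_def by blast
  have "(par ^^ k) x \<in> V" "(par ^^ k) y \<in> V" "(par ^^ k) x \<noteq> r" "(par ^^ k) y \<noteq> r"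
    using funpow_in depth_le assms k(1) by fastforce+
  moreover have "anc ((par ^^ k) x) x" "anc ((par ^^ k) y) y"
    unfolding ancestor_def using calculation assms k(1) by (auto intro!: exI[of _ k])
  ultimately show "left x y" unfolding left_def siblings_def using k by blast
next
  assume "left x y"
  then obtain a b where ab: "siblings a b" "slt a b" "anc a x" "anc b y" unfolding left_def by blast
  have "a = (par ^^ (dp x - dp a)) x" "b = (par ^^ (dp x - dp a)) y"
    using ancestor_iff ab(3,4) siblings_depth[OF ab(1)] assms(3) by auto
  moreover have "dp x - dp a < dp x"
    using depth_parent ab(1) ancestor_depth_le[OF ab(3)] unfolding siblings_def by fastforce
  ultimately show "left_of r par slt x y"
    unfolding left_of_def using assms(3) ab unfolding siblings_def
    by (intro conjI exI[of _ "dp x - dp a"]) auto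
qed

lemma left_descendant_iff:
  assumes "anc u u'" and "anc u q \<Longrightarrow> anc q u"
  shows "(left q u' \<longleftrightarrow> left q u) \<and> (left u' q \<longleftrightarrow> left u q)"
proof -
  have "left q u" if "left q u'"
  proof -
    have "q \<in> V" "u \<in> V" using left_in that ancestor_in assms(1) by auto
    moreover have "\<not> anc q u" using that assms(1) ancestor_trans left_not_ancestor by blast
    moreover have "\<not> left u q" using that assms(1) ancestor_refl left_descendants left_asym \<open>q \<in> V\<close> by blast
    ultimately show ?thesis using ancestor_or_left assms(2) by blast
  qed
  moreover have "left u q" if "left u' q"
  proof -
    have "q \<in> V" "u \<in> V" using left_in that ancestor_in assms(1) by auto
    moreover have "\<not> anc q u" using that assms(1) ancestor_trans left_not_ancestor by blast
    moreover have "\<not> left q u" using that assms(1) ancestor_refl left_descendants left_asym \<open>q \<in> V\<close> by blast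
    ultimately show ?thesis using ancestor_or_left assms(2) by blast
  qed
  ultimately show ?thesis using left_descendants assms(1) ancestor_refl left_in by blast
qed

lemma middle_of_three:
  assumes "finite J" "3 \<le> card J" "\<forall>q\<in>J. q \<in> V \<and> dp q = k"
  shows "\<exists>j1\<in>J. \<exists>j\<in>J. \<exists>j2\<in>J. left j1 j \<and> left j j2"
proof -
  obtain T where "T \<subseteq> J" "card T = 3" using obtain_subset_with_card_n[OF assms(2)] by metis
  then obtain a b c where abc: "a \<in> J" "b \<in> J" "c \<in> J" "a \<noteq> b" "b \<noteq> c" "a \<noteq> c"
    by (auto simp: card_3_iff)
  have "left p q \<or> left q p" if "p \<in> J" "q \<in> J" "p \<noteq> q" for p q
    using ancestor_or_left ancestor_depth_eq assms(3) that by metis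
  then have "left a b \<or> left b a" "left b c \<or> left c b" "left a c \<or> left c a" using abc by auto
  then show ?thesis using abc(1-3) left_trans by meson
qed

lemma left_ancestor_right: "left x u \<Longrightarrow> anc w u \<Longrightarrow> dp w = dp x \<Longrightarrow> left x w"
proof -
  assume xu: "left x u" and w: "anc w u" "dp w = dp x"
  have "x \<in> V" "w \<in> V" using left_in[OF xu] ancestor_in[OF w(1)] by auto
  moreover have "x \<noteq> w" using xu w(1) left_not_ancestor by blast
  moreover have "\<not> left w x" using left_descendants[of w x u x] xu w(1) ancestor_refl \<open>x \<in> V\<close> left_asym by blast
  ultimately show "left x w" using ancestor_or_left ancestor_depth_eq w(2) by metis
qed

lemma left_ancestor_left: "left u y \<Longrightarrow> anc w u \<Longrightarrow> dp w = dp y \<Longrightarrow> left w y"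
proof -
  assume uy: "left u y" and w: "anc w u" "dp w = dp y"
  have "y \<in> V" "w \<in> V" using left_in[OF uy] ancestor_in[OF w(1)] by auto
  moreover have "y \<noteq> w" using uy w(1) left_not_ancestor by blast
  moreover have "\<not> left y w" using left_descendants[of y w y u] uy w(1) ancestor_refl \<open>y \<in> V\<close> left_asym by blast
  ultimately show "left w y" using ancestor_or_left ancestor_depth_eq w(2) by metis
qed

end

section \<open>Neat layered wheels\<close>

locale neat_layered_wheel =
  fixes V :: "'a set" and r :: 'a and par :: "'a \<Rightarrow> 'a"
    and slt :: "'a \<Rightarrow> 'a \<Rightarrow> bool" and E :: "'a \<Rightarrow> 'a \<Rightarrow> bool"
  assumes wheel: "layered_wheel V r par slt E" and neat: "neat V r par"
begin

sublocale planar_tree V r par slt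
  using wheel unfolding layered_wheel_def by unfold_locales blast+

lemma finite_children: "v \<in> V \<Longrightarrow> finite (ch v)"
  and edge_sym: "E u v \<Longrightarrow> u \<in> V \<and> v \<in> V \<and> u \<noteq> v \<and> E v u"
  and layer_edge: "u \<in> layer V r par n \<Longrightarrow> v \<in> layer V r par n \<Longrightarrow> E u v \<Longrightarrow>
    (left_of r par slt u v \<and> \<not> (\<exists>w\<in>layer V r par n. left_of r par slt u w \<and> left_of r par slt w v))
    \<or> (left_of r par slt v u \<and> \<not> (\<exists>w\<in>layer V r par n. left_of r par slt v w \<and> left_of r par slt w u))"
  and edge_ancestor: "E u v \<Longrightarrow> dp u \<noteq> dp v \<Longrightarrow> anc u v \<or> anc v u"
  using wheel unfolding layered_wheel_def by blast+

lemma degree_two_paths_bounded: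
  "\<exists>B. \<forall>xs. tpath V r par xs \<and> (\<forall>x\<in>set xs. tdegree V r par x = 2) \<longrightarrow> length xs \<le> B"
  using wheel unfolding layered_wheel_def by blast

lemma has_child: "v \<in> V \<Longrightarrow> \<exists>c. c \<in> ch v"
  using neat unfolding neat_def by blast

definition some_child :: "'a \<Rightarrow> 'a" where
  "some_child v = (SOME c. c \<in> ch v)"

lemma some_child:
  assumes "v \<in> V"
  shows "some_child v \<in> V \<and> some_child v \<noteq> r \<and> par (some_child v) = v \<and> anc v (some_child v)
    \<and> dp (some_child v) = Suc (dp v)"
proof -
  have "some_child v \<in> ch v" unfolding some_child_def using has_child[OF assms] by (rule someI_ex)
  then show ?thesis using child_ancestor children_iff by blast
qed

lemma finite_layer: "finite (layer V r par n)"
proof (induction n)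
  case 0
  have "layer V r par 0 \<subseteq> {r}" using depth_eq_0 unfolding layer_def by auto
  then show ?case using finite_subset by blast
next
  case (Suc n)
  have "layer V r par (Suc n) \<subseteq> (\<Union>p\<in>layer V r par n. ch p)"
  proof
    fix x assume "x \<in> layer V r par (Suc n)"
    then have x: "x \<in> V" "dp x = Suc n" "x \<noteq> r" using depth_root unfolding layer_def by auto
    then have "par x \<in> layer V r par n" using parent_in depth_parent unfolding layer_def by auto
    moreover have "x \<in> ch (par x)" using x children_iff by blast
    ultimately show "x \<in> (\<Union>p\<in>layer V r par n. ch p)" by blast
  qed
  moreover have "finite (\<Union>p\<in>layer V r par n. ch p)"
    using Suc finite_children unfolding layer_def by auto
  ultimately show ?case using finite_subset by blast
qed

lemma exists_descendant_at_depth: "v \<in> V \<Longrightarrow> dp v \<le> k \<Longrightarrow> \<exists>w. anc v w \<and> dp w = k"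
proof (induction "k - dp v" arbitrary: v)
  case 0
  then show ?case using ancestor_refl by (intro exI[of _ v]) auto
next
  case (Suc n)
  obtain c where c: "c \<in> ch v" using has_child Suc.prems by blast
  then have "anc v c" "dp c = Suc (dp v)" "c \<in> V" using child_ancestor children_iff by auto
  moreover have "n = k - dp c" "dp c \<le> k" using Suc.hyps(2) calculation(2) by auto
  moreover obtain w where "anc c w" "dp w = k" using Suc.hyps(1) calculation by blast
  ultimately show ?case using ancestor_trans by blast
qed

text \<open>A layer edge joins nodes adjacent in the left-to-right order, and all other edges are
  vertical.\<close>

lemma no_edge_across:
  assumes "left x u" "left u y"
  shows "\<not> E x y"
proof
  assume e: "E x y"
  have xy: "left x y" using left_trans assms by blast
  have in_V: "x \<in> V" "y \<in> V" "u \<in> V" using left_in assms by auto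
  have same: "dp x = dp y"
    using edge_ancestor[OF e] left_not_ancestor[OF xy] by blast
  obtain w where w: "w \<in> V" "dp w = dp x" "left x w" "left w y"
  proof (cases "dp x \<le> dp u")
    case True
    define w where "w = ancestor_at u (dp x)"
    have w: "anc w u" "dp w = dp x" "w \<in> V" using ancestor_at[OF in_V(3) True] ancestor_in w_def by auto
    have "left x w" using left_ancestor_right[OF assms(1) w(1,2)] .
    moreover have "left w y" using left_ancestor_left[OF assms(2) w(1)] w(2) same by simp
    ultimately show ?thesis using that w by blast
  next
    case False
    then obtain w where "anc u w" "dp w = dp x"
      using exists_descendant_at_depth in_V(3) by (meson nat_le_linear)
    moreover have "left x w" "left w y"
      using left_descendants assms ancestor_refl in_V calculation(1) by blast+
    ultimately show ?thesis using that ancestor_in by blast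
  qed
  have layers: "x \<in> layer V r par (dp x)" "y \<in> layer V r par (dp x)" "w \<in> layer V r par (dp x)"
    using in_V w same unfolding layer_def by auto
  have "left_of r par slt x w" "left_of r par slt w y" "\<not> left_of r par slt y x"
    using left_of_iff_left in_V w same left_asym xy by auto
  then show False using layer_edge[OF layers(1,2) e] layers(3) by blast
qed

lemma some_child_iter:
  assumes "x \<in> V"
  shows "(some_child ^^ i) x \<in> V \<and> anc x ((some_child ^^ i) x) \<and> dp ((some_child ^^ i) x) = dp x + i"
proof (induction i)
  case (Suc i)
  then show ?case using some_child[of "(some_child ^^ i) x"] ancestor_trans by auto
qed (use assms ancestor_refl in auto)

text \<open>A descending chain of nodes with one child each is a path of degree-2 nodes, so
  within a bounded number of levels every node branches.\<close>

lemma exists_branching_descendant: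
  assumes chain: "\<And>xs. tpath V r par xs \<Longrightarrow> \<forall>x\<in>set xs. tdegree V r par x = 2 \<Longrightarrow> length xs \<le> B"
    and x: "x \<in> V" "x \<noteq> r"
  shows "\<exists>i\<le>B. card (ch ((some_child ^^ i) x)) \<noteq> 1"
proof (rule ccontr)
  define c where "c i = (some_child ^^ i) x" for i
  have c: "c i \<in> V" "dp (c i) = dp x + i" "c i \<noteq> r" for i
    using some_child_iter[OF x(1), of i] x depth_root depth_eq_0 unfolding c_def by auto
  have c_parent: "par (c (Suc i)) = c i" for i
    using some_child c unfolding c_def by simp
  assume "\<not> (\<exists>i\<le>B. card (ch (c i)) \<noteq> 1)"
  then have one: "\<forall>i\<le>B. card (ch (c i)) = 1" unfolding c_def by blast
  define xs where "xs = map c [0..<Suc B]"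
  have "inj c"
  proof (rule injI)
    fix i j assume "c i = c j"
    then have "dp x + i = dp x + j" using c(2)[of i] c(2)[of j] by metis
    then show "i = j" by simp
  qed
  have "tpath V r par xs"
    unfolding tpath_def
  proof (intro conjI allI impI)
    show "xs \<noteq> []" "set xs \<subseteq> V" unfolding xs_def using c by auto
    show "distinct xs"
      unfolding xs_def using inj_on_subset[OF \<open>inj c\<close>] by (simp add: distinct_map del: upt_Suc)
    fix i assume "Suc i < length xs"
    then have "xs ! i = c i" "xs ! Suc i = c (Suc i)" unfolding xs_def by (auto simp del: upt_Suc)
    then show "tadj V r par (xs ! i) (xs ! Suc i)" unfolding tadj_def using c c_parent by auto
  qed
  moreover have "\<forall>y\<in>set xs. tdegree V r par y = 2"
    unfolding xs_def tdegree_def using one c by auto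
  ultimately have "length xs \<le> B" by (rule chain)
  then show False unfolding xs_def by simp
qed

lemma two_descendants:
  assumes chain: "\<And>xs. tpath V r par xs \<Longrightarrow> \<forall>x\<in>set xs. tdegree V r par x = 2 \<Longrightarrow> length xs \<le> B"
    and x: "x \<in> V"
  shows "\<exists>y1 y2. y1 \<noteq> y2 \<and> anc x y1 \<and> anc x y2 \<and> dp y1 = dp x + (B + 2) \<and> dp y2 = dp x + (B + 2)"
proof -
  obtain x' where x': "x' \<in> V" "x' \<noteq> r" "anc x x'" "dp x' \<le> dp x + 1"
  proof (cases "x = r")
    case True
    then show ?thesis using that[of "some_child x"] some_child[OF x] by simp
  next
    case False
    then show ?thesis using that x ancestor_refl by simp
  qed
  obtain i where i: "i \<le> B" "card (ch ((some_child ^^ i) x')) \<noteq> 1"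
    using exists_branching_descendant[OF chain x'(1,2)] by blast
  let ?z = "(some_child ^^ i) x'"
  have z: "?z \<in> V" "anc x ?z" "dp ?z = dp x' + i"
    using some_child_iter[OF x'(1)] ancestor_trans[OF x'(3)] by blast+
  obtain c1 where c1: "c1 \<in> ch ?z" using has_child z(1) by blast
  moreover have "ch ?z \<noteq> {c1}" using i(2) by auto
  ultimately obtain c2 where c2: "c2 \<in> ch ?z" "c2 \<noteq> c1" by blast
  have branch: "anc x c1" "anc x c2" "dp c1 = Suc (dp ?z)" "dp c2 = Suc (dp ?z)"
    using c1 c2 child_ancestor ancestor_trans[OF z(2)] by blast+
  have "dp c1 \<le> dp x + (B + 2)" "dp c2 \<le> dp x + (B + 2)" "c1 \<in> V" "c2 \<in> V"
    using branch z(3) x'(4) i(1) c1 c2 children_iff by auto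
  then obtain y1 y2 where y: "anc c1 y1" "dp y1 = dp x + (B + 2)" "anc c2 y2" "dp y2 = dp x + (B + 2)"
    using exists_descendant_at_depth by blast
  moreover have "y1 \<noteq> y2"
  proof
    assume "y1 = y2"
    then show False using same_depth_ancestors_eq[of c1 y1 c2] y branch(3,4) c2(2) by simp
  qed
  ultimately show ?thesis using branch ancestor_trans by blast
qed

text \<open>Halving: of two disjoint subtrees one contains fewer than half of the nodes of \<open>F\<close>.\<close>

lemma exists_free_descendant:
  assumes chain: "\<And>xs. tpath V r par xs \<Longrightarrow> \<forall>x\<in>set xs. tdegree V r par x = 2 \<Longrightarrow> length xs \<le> B"
  shows "x \<in> V \<Longrightarrow> finite F \<Longrightarrow> card F < 2 ^ m \<Longrightarrow>
     \<exists>v. anc x v \<and> dp v \<le> dp x + m * (B + 2) \<and> (\<forall>z\<in>F. \<not> anc v z)"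
proof (induction m arbitrary: x F)
  case 0
  then show ?case using ancestor_refl by (intro exI[of _ x]) auto
next
  case (Suc m)
  obtain y1 y2 where y: "y1 \<noteq> y2" "anc x y1" "anc x y2" "dp y1 = dp x + (B + 2)" "dp y2 = dp x + (B + 2)"
    using two_descendants[OF chain Suc.prems(1)] by blast
  define F1 where "F1 = {z\<in>F. anc y1 z}"
  define F2 where "F2 = {z\<in>F. anc y2 z}"
  have "F1 \<inter> F2 = {}"
  proof (rule ccontr)
    assume "F1 \<inter> F2 \<noteq> {}"
    then obtain z where "anc y1 z" "anc y2 z" unfolding F1_def F2_def by blast
    then show False using same_depth_ancestors_eq y by metis
  qed
  moreover have fin: "finite F1" "finite F2" using Suc.prems(2) unfolding F1_def F2_def by auto
  ultimately have "card F1 + card F2 = card (F1 \<union> F2)" by (simp add: card_Un_disjoint)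
  also have "\<dots> \<le> card F" using Suc.prems(2) unfolding F1_def F2_def by (intro card_mono) auto
  finally have "card F1 < 2 ^ m \<or> card F2 < 2 ^ m" using Suc.prems(3) unfolding power_Suc by linarith
  then obtain y where y': "anc x y" "dp y = dp x + (B + 2)" "card {z\<in>F. anc y z} < 2 ^ m"
    using y unfolding F1_def F2_def by blast
  moreover have "y \<in> V" "finite {z\<in>F. anc y z}" using y'(1) ancestor_in Suc.prems(2) by auto
  ultimately obtain v where v: "anc y v" "dp v \<le> dp y + m * (B + 2)" "\<forall>z\<in>{z\<in>F. anc y z}. \<not> anc v z"
    using Suc.IH by blast
  have "\<forall>z\<in>F. \<not> anc v z" using v(1,3) ancestor_trans by blast
  moreover have "anc x v" using y'(1) v(1) by (rule ancestor_trans)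
  moreover have "dp v \<le> dp x + Suc m * (B + 2)" using v(2) y'(2) by simp
  ultimately show ?case by blast
qed

end

section \<open>Regions and their decompositions\<close>

locale wheel_regions = neat_layered_wheel +
  fixes S :: "'a set" and t :: nat and H :: nat
  assumes S: "S \<subseteq> V" "finite S"
    and upward: "\<And>v. v \<in> V \<Longrightarrow> \<exists>X. finite X \<and> card X \<le> t
      \<and> (\<forall>x y. E x y \<and> dp x \<noteq> dp y \<and> anc v x \<and> \<not> anc v y \<longrightarrow> y \<in> X)"
    and free_below: "\<And>j. j \<in> V \<Longrightarrow> \<exists>v. anc j v \<and> dp v < dp j + H \<and> (\<forall>z\<in>S. \<not> anc v z)"
begin

definition free :: "'a \<Rightarrow> bool" where
  "free v \<longleftrightarrow> v \<in> V \<and> (\<forall>z\<in>S. \<not> anc v z)"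

definition wall :: "nat \<Rightarrow> 'a \<Rightarrow> bool" where
  "wall d u \<longleftrightarrow> free u \<and> d < dp u \<and> dp u \<le> d + H"

text \<open>A region is given by a depth and two optional walls, \<^const>\<open>None\<close> meaning that the
  region is unbounded on that side.\<close>

definition region :: "nat \<Rightarrow> 'a option \<Rightarrow> 'a option \<Rightarrow> 'a set" where
  "region d L R = {x \<in> S. d \<le> dp x \<and> (\<forall>u\<in>set_option L. left u x) \<and> (\<forall>u\<in>set_option R. left x u)}"

definition window :: "nat \<Rightarrow> 'a option \<Rightarrow> 'a option \<Rightarrow> 'a set" where
  "window d L R = {p \<in> V. dp p = d \<and> (\<forall>u\<in>set_option L. \<not> left p u) \<and> (\<forall>u\<in>set_option R. \<not> left u p)}"

definition stem :: "nat \<Rightarrow> 'a \<Rightarrow> 'a set" where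
  "stem d u = {y \<in> S. anc y u \<and> d \<le> dp y}"

definition attach :: "'a \<Rightarrow> 'a set" where
  "attach p = {y \<in> S. anc y p \<and> y \<noteq> p \<and> (\<exists>z\<in>S. anc p z \<and> E z y)}"

definition boundary :: "nat \<Rightarrow> 'a option \<Rightarrow> 'a option \<Rightarrow> 'a set" where
  "boundary d L R = (\<Union>u\<in>set_option L \<union> set_option R. stem d u) \<union> (\<Union>p\<in>window d L R. attach p)"

definition admissible :: "nat \<Rightarrow> 'a option \<Rightarrow> 'a option \<Rightarrow> bool" where
  "admissible d L R \<longleftrightarrow> (\<forall>u\<in>set_option L \<union> set_option R. wall d u) \<and> card (window d L R) \<le> 2"

abbreviation width :: nat where
  "width \<equiv> 3 * (H + 1) + 2 * t"

definition decomposable :: "nat \<Rightarrow> 'a option \<Rightarrow> 'a option \<Rightarrow> bool" where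
  "decomposable d L R \<longleftrightarrow> rooted_decomposable E (region d L R \<union> boundary d L R) (boundary d L R) width"

lemma H_pos: "0 < H"
proof -
  obtain v where "dp v < dp r + H" using free_below[OF root_in] by blast
  then show ?thesis using depth_root by simp
qed

lemma exists_free_below: "j \<in> V \<Longrightarrow> \<exists>v. anc j v \<and> dp v < dp j + H \<and> free v"
  using free_below ancestor_in unfolding free_def by blast

lemma attach_depth: "y \<in> attach p \<Longrightarrow> dp y < dp p"
proof -
  assume "y \<in> attach p"
  then have "anc y p" "y \<noteq> p" unfolding attach_def by auto
  then show ?thesis using ancestor_depth_le ancestor_depth_eq le_neq_implies_less by blast
qed

lemma card_attach: "p \<in> V \<Longrightarrow> card (attach p) \<le> t"
proof -
  assume "p \<in> V"
  then obtain X where X: "finite X" "card X \<le> t"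
    "\<forall>x y. E x y \<and> dp x \<noteq> dp y \<and> anc p x \<and> \<not> anc p y \<longrightarrow> y \<in> X"
    using upward by blast
  have "attach p \<subseteq> X"
  proof
    fix y assume y: "y \<in> attach p"
    then obtain z where z: "z \<in> S" "anc p z" "E z y" "anc y p" "y \<noteq> p"
      unfolding attach_def by blast
    have "\<not> anc p y" using z(4,5) ancestor_antisym by blast
    moreover have "dp z \<noteq> dp y" using attach_depth[OF y] ancestor_depth_le[OF z(2)] by simp
    ultimately show "y \<in> X" using X(3) z(2,3) by blast
  qed
  then have "card (attach p) \<le> card X" by (rule card_mono[OF X(1)])
  then show ?thesis using X(2) by linarith
qed

lemma card_stem: "wall d u \<Longrightarrow> card (stem d u) \<le> H + 1"
proof -
  assume "wall d u"
  then have u: "d < dp u" "dp u \<le> d + H" unfolding wall_def by auto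
  have "stem d u \<subseteq> ancestor_at u ` {d..dp u}"
  proof
    fix y assume "y \<in> stem d u"
    then have "anc y u" "d \<le> dp y" unfolding stem_def by auto
    then show "y \<in> ancestor_at u ` {d..dp u}"
      using ancestor_eq_ancestor_at ancestor_depth_le by (intro rev_image_eqI[of "dp y"]) auto
  qed
  then have "card (stem d u) \<le> card (ancestor_at u ` {d..dp u})" by (rule card_mono[rotated]) simp
  also have "\<dots> \<le> card {d..dp u}" by (rule card_image_le) simp
  finally show ?thesis using u by simp
qed

lemma finite_window: "finite (window d L R)"
  using finite_layer[of d] unfolding window_def layer_def by (rule finite_subset[rotated]) auto

lemma card_boundary:
  assumes "admissible d L R"
  shows "card (boundary d L R) \<le> 2 * (H + 1) + 2 * t"
proof -
  let ?W = "set_option L \<union> set_option R"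
  have opt: "card (set_option X) \<le> 1" for X :: "'a option" by (cases X) simp_all
  then have "card ?W \<le> 2" using opt[of L] opt[of R] card_Un_le[of "set_option L" "set_option R"] by linarith
  have "card (\<Union>u\<in>?W. stem d u) \<le> (\<Sum>u\<in>?W. card (stem d u))" by (rule card_UN_le) simp
  also have "\<dots> \<le> card ?W * (H + 1)"
    using sum_bounded_above[of ?W "\<lambda>u. card (stem d u)" "H + 1"] card_stem assms
    unfolding admissible_def by (simp only: of_nat_id)
  also have "\<dots> \<le> 2 * (H + 1)" using \<open>card ?W \<le> 2\<close> by (rule mult_le_mono1)
  finally have stems: "card (\<Union>u\<in>?W. stem d u) \<le> 2 * (H + 1)" .
  have "card (\<Union>p\<in>window d L R. attach p) \<le> (\<Sum>p\<in>window d L R. card (attach p))"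
    by (rule card_UN_le[OF finite_window])
  also have "\<dots> \<le> card (window d L R) * t"
  proof -
    have "\<forall>p\<in>window d L R. card (attach p) \<le> t" using card_attach unfolding window_def by blast
    then show ?thesis using sum_bounded_above[of "window d L R" "\<lambda>p. card (attach p)" t] by (simp only: of_nat_id)
  qed
  also have "\<dots> \<le> 2 * t" using assms unfolding admissible_def by simp
  finally have "card (\<Union>p\<in>window d L R. attach p) \<le> 2 * t" .
  moreover have "card (boundary d L R) \<le> card (\<Union>u\<in>?W. stem d u) + card (\<Union>p\<in>window d L R. attach p)"
    unfolding boundary_def by (rule card_Un_le)
  ultimately show ?thesis using stems by linarith
qed

lemma region_subset: "region d L R \<subseteq> S"
  unfolding region_def by auto

lemma boundary_subset: "boundary d L R \<subseteq> S"
  unfolding boundary_def stem_def attach_def by auto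

lemma region_boundary_disjoint: "region d L R \<inter> boundary d L R = {}"
proof -
  have "x \<notin> stem d u" if "x \<in> region d L R" "u \<in> set_option L \<union> set_option R" for x u
    using that left_not_ancestor unfolding region_def stem_def by blast
  moreover have "x \<notin> attach p" if "x \<in> region d L R" "p \<in> window d L R" for x p
  proof
    assume "x \<in> attach p"
    then have "dp x < dp p" by (rule attach_depth)
    then show False using that unfolding region_def window_def by simp
  qed
  ultimately show ?thesis unfolding boundary_def by blast
qed

lemma free_between_ancestor:
  assumes "free u" "y \<in> S" "\<not> left u y" "\<not> left y u"
  shows "anc y u"
  using assms ancestor_or_left S(1) unfolding free_def by blast

lemma boundary_edge:
  assumes walls: "\<forall>u\<in>set_option L \<union> set_option R. wall d u"
    and x: "x \<in> region d L R" and y: "y \<in> S" "y \<notin> region d L R" and e: "E x y"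
  shows "y \<in> boundary d L R"
proof -
  have x': "x \<in> S" "d \<le> dp x" "\<forall>u\<in>set_option L. left u x" "\<forall>u\<in>set_option R. left x u"
    using x unfolding region_def by auto
  show ?thesis
  proof (cases "dp y < d")
    case True
    then have "\<not> anc x y" using x'(2) ancestor_depth_le by fastforce
    then have yx: "anc y x" using edge_ancestor[OF e] True x'(2) by auto
    define p where "p = ancestor_at x d"
    have p: "anc p x" "dp p = d" "p \<in> V"
      using ancestor_at[of x d] ancestor_in x'(1,2) S(1) unfolding p_def by auto
    have "\<not> left p u" if "u \<in> set_option L" for u
      using left_descendants[of p u x u] p(1) ancestor_refl left_in x'(3) that left_asym by blast
    moreover have "\<not> left u p" if "u \<in> set_option R" for u
      using left_descendants[of u p u x] p(1) ancestor_refl left_in x'(4) that left_asym by blast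
    ultimately have "p \<in> window d L R" unfolding window_def using p(2,3) by simp
    moreover have "y \<in> attach p"
      unfolding attach_def using y(1) ancestor_linear[OF yx p(1)] True p(2) x'(1) p(1) e by auto
    ultimately show ?thesis unfolding boundary_def by blast
  next
    case False
    then obtain u where u: "u \<in> set_option L \<union> set_option R" "\<not> left u y" "\<not> left y u"
    proof (cases "\<forall>u\<in>set_option L. left u y")
      case True
      then obtain u where "u \<in> set_option R" "\<not> left y u" using y False unfolding region_def by auto
      moreover have "\<not> left u y" using no_edge_across x'(4) calculation(1) e by blast
      ultimately show ?thesis using that by blast
    next
      case False
      then obtain u where "u \<in> set_option L" "\<not> left u y" by blast
      moreover have "\<not> left y u" using no_edge_across x'(3) calculation(1) e edge_sym by blast
      ultimately show ?thesis using that by blast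
    qed
    then have "anc y u" using free_between_ancestor walls y(1) unfolding wall_def by blast
    then have "y \<in> stem d u" using y(1) False unfolding stem_def by simp
    then show ?thesis using u(1) unfolding boundary_def by blast
  qed
qed

lemma window_mono_right:
  assumes "\<forall>u\<in>set_option R. left v u"
  shows "window d L (Some v) \<subseteq> window d L R"
proof
  fix p assume "p \<in> window d L (Some v)"
  then have "\<not> left v p" "\<forall>u\<in>set_option L. \<not> left p u" "p \<in> V" "dp p = d"
    unfolding window_def by auto
  moreover have "\<not> left u p" if "u \<in> set_option R" for u
    using left_trans[of v u p] assms that calculation(1) by blast
  ultimately show "p \<in> window d L R" unfolding window_def by simp
qed

lemma window_mono_left:
  assumes "\<forall>u\<in>set_option L. left u v"
  shows "window d (Some v) R \<subseteq> window d L R"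
proof
  fix p assume "p \<in> window d (Some v) R"
  then have "\<not> left p v" "\<forall>u\<in>set_option R. \<not> left u p" "p \<in> V" "dp p = d"
    unfolding window_def by auto
  moreover have "\<not> left p u" if "u \<in> set_option L" for u
    using left_trans[of p u v] assms that calculation(1) by blast
  ultimately show "p \<in> window d L R" unfolding window_def by simp
qed

lemma wall_left_of_window:
  assumes "wall d u" "dp j = Suc d" "left j' j" "\<not> left j' u" "\<not> left j u"
  shows "left u j"
proof -
  have u: "u \<in> V" "d < dp u" using assms(1) unfolding wall_def free_def by auto
  have "\<not> anc j u" using assms(3,4) left_descendants[of j' j j' u] ancestor_refl left_in by blast
  moreover have "\<not> anc u j"
  proof
    assume "anc u j"
    then have "u = j" using ancestor_depth_le ancestor_depth_eq assms(2) u(2) by (metis Suc_leI le_antisym)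
    then show False using assms(3,4) by simp
  qed
  ultimately show ?thesis using ancestor_or_left u(1) left_in assms(3,5) by blast
qed

lemma wall_right_of_window:
  assumes "wall d u" "dp j = Suc d" "left j j'" "\<not> left u j'" "\<not> left u j"
  shows "left j u"
proof -
  have u: "u \<in> V" "d < dp u" using assms(1) unfolding wall_def free_def by auto
  have "\<not> anc j u" using assms(3,4) left_descendants[of j j' u j'] ancestor_refl left_in by blast
  moreover have "\<not> anc u j"
  proof
    assume "anc u j"
    then have "u = j" using ancestor_depth_le ancestor_depth_eq assms(2) u(2) by (metis Suc_leI le_antisym)
    then show False using assms(3,4) by simp
  qed
  ultimately show ?thesis using ancestor_or_left u(1) left_in assms(3,5) by blast
qed

lemma wall_below_window:
  assumes walls: "\<forall>u\<in>set_option L \<union> set_option R. wall d u"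
    and J: "j1 \<in> window (Suc d) L R" "j \<in> window (Suc d) L R" "j2 \<in> window (Suc d) L R"
    and jj: "left j1 j" "left j j2"
  obtains v where "wall d v" "anc j v" "\<forall>u\<in>set_option L. left u v" "\<forall>u\<in>set_option R. left v u"
proof -
  have j: "j \<in> V" "dp j = Suc d" using J(2) unfolding window_def by auto
  obtain v where v: "anc j v" "dp v < dp j + H" "free v" using exists_free_below[OF j(1)] by blast
  have "wall d v" using v j(2) ancestor_depth_le[OF v(1)] unfolding wall_def by simp
  moreover have "\<forall>u\<in>set_option L. left u v"
  proof
    fix u assume u: "u \<in> set_option L"
    then have "left u j"
      using wall_left_of_window[OF _ j(2) jj(1)] walls J(1,2) unfolding window_def by blast
    then show "left u v" using left_descendants ancestor_refl left_in v(1) by blast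
  qed
  moreover have "\<forall>u\<in>set_option R. left v u"
  proof
    fix u assume u: "u \<in> set_option R"
    then have "left j u"
      using wall_right_of_window[OF _ j(2) jj(2)] walls J(2,3) unfolding window_def by blast
    then show "left v u" using left_descendants ancestor_refl left_in v(1) by blast
  qed
  ultimately show ?thesis using that v(1) by blast
qed

text \<open>If the window one level down has at least three nodes, a free node below the middle
  one is a new wall splitting the region into two with smaller windows.\<close>

lemma narrowing:
  assumes adm: "admissible d L R" and three: "3 \<le> card (window (Suc d) L R)"
  obtains v where "wall d v" "\<forall>u\<in>set_option L. left u v" "\<forall>u\<in>set_option R. left v u"
    "admissible d L (Some v)" "admissible d (Some v) R"
    "card (window (Suc d) L (Some v)) < card (window (Suc d) L R)"
    "card (window (Suc d) (Some v) R) < card (window (Suc d) L R)"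
proof -
  let ?J = "window (Suc d) L R"
  have walls: "\<forall>u\<in>set_option L \<union> set_option R. wall d u" using adm unfolding admissible_def by blast
  obtain j1 j j2 where J: "j1 \<in> ?J" "j \<in> ?J" "j2 \<in> ?J" and jj: "left j1 j" "left j j2"
    using middle_of_three[OF finite_window three] unfolding window_def by blast
  obtain v where wall: "wall d v" and v: "anc j v"
    and vL: "\<forall>u\<in>set_option L. left u v" and vR: "\<forall>u\<in>set_option R. left v u"
    using wall_below_window[OF walls J jj] by blast
  have adm': "admissible d L (Some v)" "admissible d (Some v) R"
    using adm wall card_mono[OF finite_window window_mono_right[OF vR, of d L]]
      card_mono[OF finite_window window_mono_left[OF vL, of d R]]
    unfolding admissible_def by auto
  have J1: "window (Suc d) L (Some v) \<subset> ?J"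
  proof
    show "window (Suc d) L (Some v) \<subseteq> ?J" by (rule window_mono_right[OF vR])
    have "left v j2" using left_descendants[OF jj(2) v] ancestor_refl left_in jj(2) by blast
    then show "window (Suc d) L (Some v) \<noteq> ?J" using J(3) unfolding window_def by auto
  qed
  have J2: "window (Suc d) (Some v) R \<subset> ?J"
  proof
    show "window (Suc d) (Some v) R \<subseteq> ?J" by (rule window_mono_left[OF vL])
    have "left j1 v" using left_descendants[OF jj(1) _ v] ancestor_refl left_in jj(1) by blast
    then show "window (Suc d) (Some v) R \<noteq> ?J" using J(1) unfolding window_def by auto
  qed
  show ?thesis
    by (rule that[OF wall vL vR adm' psubset_card_mono[OF finite_window J1]
      psubset_card_mono[OF finite_window J2]])
qed

lemma stem_subset_boundary:
  assumes walls: "\<forall>u\<in>set_option L \<union> set_option R. wall d u"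
    and vL: "\<forall>u\<in>set_option L. left u v" and vR: "\<forall>u\<in>set_option R. left v u"
  shows "stem d v \<subseteq> boundary d L R \<union> {y \<in> region d L R. anc y v}"
proof
  fix y assume "y \<in> stem d v"
  then have y: "y \<in> S" "anc y v" "d \<le> dp y" unfolding stem_def by auto
  show "y \<in> boundary d L R \<union> {y \<in> region d L R. anc y v}"
  proof (cases "y \<in> region d L R")
    case False
    then obtain u where u: "u \<in> set_option L \<union> set_option R" "\<not> left u y" "\<not> left y u"
    proof (cases "\<forall>u\<in>set_option L. left u y")
      case True
      then obtain u where "u \<in> set_option R" "\<not> left y u" using y False unfolding region_def by auto
      moreover have "\<not> left u y"
        using left_descendants[of u y u v] y(2) vR calculation(1) ancestor_refl left_in left_asym by blast
      ultimately show ?thesis using that by blast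
    next
      case False
      then obtain u where "u \<in> set_option L" "\<not> left u y" by blast
      moreover have "\<not> left y u"
        using left_descendants[of y u v u] y(2) vL calculation(1) ancestor_refl left_in left_asym by blast
      ultimately show ?thesis using that by blast
    qed
    then have "anc y u" using free_between_ancestor walls y(1) unfolding wall_def by blast
    then show ?thesis using u(1) y unfolding boundary_def stem_def by blast
  qed (use y in blast)
qed

lemma region_split:
  assumes v: "wall d v" and vL: "\<forall>u\<in>set_option L. left u v" and vR: "\<forall>u\<in>set_option R. left v u"
  shows "region d L R = {y \<in> region d L R. anc y v} \<union> region d L (Some v) \<union> region d (Some v) R"
    (is "?C = ?D \<union> ?C1 \<union> ?C2")
proof
  show "?C \<subseteq> ?D \<union> ?C1 \<union> ?C2"
  proof
    fix x assume x: "x \<in> ?C"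
    then have "x \<in> V" "\<not> anc v x" using S v region_subset unfolding wall_def free_def by blast+
    then have "anc x v \<or> left x v \<or> left v x"
      using ancestor_or_left v unfolding wall_def free_def by blast
    then show "x \<in> ?D \<union> ?C1 \<union> ?C2" using x unfolding region_def by auto
  qed
  have "?C1 \<subseteq> ?C" using vR left_trans unfolding region_def by blast
  moreover have "?C2 \<subseteq> ?C" using vL left_trans unfolding region_def by blast
  ultimately show "?D \<union> ?C1 \<union> ?C2 \<subseteq> ?C" by blast
qed

lemma decomposable_split:
  assumes adm: "admissible d L R" and v: "wall d v"
    and vL: "\<forall>u\<in>set_option L. left u v" and vR: "\<forall>u\<in>set_option R. left v u"
    and D1: "decomposable d L (Some v)" and D2: "decomposable d (Some v) R"
  shows "decomposable d L R"
proof -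
  let ?C = "region d L R" and ?C1 = "region d L (Some v)" and ?C2 = "region d (Some v) R"
  define D where "D = {y \<in> ?C. anc y v}"
  have walls: "\<forall>u\<in>set_option L \<union> set_option R. wall d u" using adm unfolding admissible_def by blast
  have walls1: "\<forall>u\<in>set_option L \<union> set_option (Some v). wall d u"
    and walls2: "\<forall>u\<in>set_option (Some v) \<union> set_option R. wall d u" using walls v by auto
  have split: "?C = D \<union> ?C1 \<union> ?C2"
    unfolding D_def using region_split[OF v vL vR] .
  have disjoint: "D \<inter> ?C1 = {}" "D \<inter> ?C2 = {}" "?C1 \<inter> ?C2 = {}"
    using left_not_ancestor left_asym unfolding D_def region_def by auto
  have sub1: "boundary d L (Some v) \<subseteq> boundary d L R \<union> D"
    using stem_subset_boundary[OF walls vL vR] window_mono_right[OF vR, of d L]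
    unfolding boundary_def D_def by auto
  have sub2: "boundary d (Some v) R \<subseteq> boundary d L R \<union> D"
    using stem_subset_boundary[OF walls vL vR] window_mono_left[OF vL, of d R]
    unfolding boundary_def D_def by auto
  have card: "card (boundary d L R \<union> D) \<le> width"
  proof -
    have "D \<subseteq> stem d v" unfolding D_def stem_def region_def by auto
    then have "card D \<le> H + 1" using card_stem[OF v] card_mono[of "stem d v" D] S(2)
      unfolding stem_def by fastforce
    then show ?thesis using card_boundary[OF adm] card_Un_le[of "boundary d L R" D] by simp
  qed
  show ?thesis
    unfolding decomposable_def
  proof (rule rooted_decomposable_separate[OF _ split disjoint region_boundary_disjoint sub1 sub2])
    show "E y x" if "E x y" for x y using edge_sym that by blast
    show "y \<in> boundary d L (Some v)"
      if "x \<in> ?C1" "y \<in> ?C \<union> boundary d L R" "y \<notin> ?C1" "E x y" for x y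
      using boundary_edge[OF walls1] that region_subset boundary_subset by blast
    show "y \<in> boundary d (Some v) R"
      if "x \<in> ?C2" "y \<in> ?C \<union> boundary d L R" "y \<notin> ?C2" "E x y" for x y
      using boundary_edge[OF walls2] that region_subset boundary_subset by blast
  qed (use D1 D2 card in \<open>simp_all add: decomposable_def\<close>)
qed

text \<open>Descending one level, a wall at depth \<open>d + 1\<close> is replaced by a child, which is
  still free and lies on the same side of every node that matters.\<close>

definition push_wall :: "nat \<Rightarrow> 'a \<Rightarrow> 'a" where
  "push_wall d u = (if dp u = Suc d then some_child u else u)"

lemma push_wall:
  assumes "wall d u"
  shows "anc u (push_wall d u) \<and> wall (Suc d) (push_wall d u)
    \<and> (\<forall>y\<in>S. anc y (push_wall d u) \<longrightarrow> anc y u)"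
proof -
  have u: "free u" "d < dp u" "dp u \<le> d + H" "u \<in> V" using assms unfolding wall_def free_def by auto
  show ?thesis
  proof (cases "dp u = Suc d")
    case True
    let ?c = "some_child u"
    have c: "?c \<in> V" "?c \<noteq> r" "par ?c = u" "anc u ?c" "dp ?c = Suc (dp u)" using some_child[OF u(4)] by auto
    have "free ?c" using u(1) c(1) ancestor_trans[OF c(4)] unfolding free_def by blast
    moreover have "anc y u" if "y \<in> S" "anc y ?c" for y
    proof -
      have "y = ?c \<or> anc y u" using that(2) ancestor_parent_iff[OF c(1,2)] c(3) by simp
      moreover have "y \<noteq> ?c" using that(1) \<open>free ?c\<close> ancestor_refl c(1) unfolding free_def by blast
      ultimately show ?thesis by simp
    qed
    moreover have "push_wall d u = ?c" using True unfolding push_wall_def by simp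
    ultimately show ?thesis using True c(4,5) u(3) H_pos unfolding wall_def by simp
  next
    case False
    then show ?thesis using u ancestor_refl unfolding push_wall_def wall_def by auto
  qed
qed

lemma push_wall_left_iff:
  assumes "wall d u" "x \<in> S"
  shows "(left x (push_wall d u) \<longleftrightarrow> left x u) \<and> (left (push_wall d u) x \<longleftrightarrow> left u x)"
proof (rule left_descendant_iff)
  show "anc u (push_wall d u)" using push_wall[OF assms(1)] by blast
  show "anc x u" if "anc u x" using that assms unfolding wall_def free_def by blast
qed

lemma region_push:
  assumes walls: "\<forall>u\<in>set_option L \<union> set_option R. wall d u"
  shows "region (Suc d) (map_option (push_wall d) L) (map_option (push_wall d) R)
    = {x \<in> region d L R. Suc d \<le> dp x}"
proof -
  have "(\<forall>u\<in>set_option L. left (push_wall d u) x) \<longleftrightarrow> (\<forall>u\<in>set_option L. left u x)"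
    and "(\<forall>u\<in>set_option R. left x (push_wall d u)) \<longleftrightarrow> (\<forall>u\<in>set_option R. left x u)"
    if "x \<in> S" for x
    using push_wall_left_iff[OF _ that] walls by (auto intro!: ball_cong)
  then show ?thesis unfolding region_def by auto
qed

lemma window_push:
  assumes walls: "\<forall>u\<in>set_option L \<union> set_option R. wall d u"
  shows "window (Suc d) (map_option (push_wall d) L) (map_option (push_wall d) R) = window (Suc d) L R"
proof -
  have iff: "(left q (push_wall d u) \<longleftrightarrow> left q u) \<and> (left (push_wall d u) q \<longleftrightarrow> left u q)"
    if "u \<in> set_option L \<union> set_option R" "dp q = Suc d" for u q
  proof (rule left_descendant_iff)
    have u: "wall d u" using walls that(1) by blast
    then show "anc u (push_wall d u)" using push_wall by blast
    show "anc q u" if "anc u q"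
    proof -
      have "dp q \<le> dp u" using u \<open>dp q = Suc d\<close> unfolding wall_def by simp
      then have "u = q" using that ancestor_depth_le ancestor_depth_eq le_antisym by blast
      then show ?thesis using that by simp
    qed
  qed
  have "(\<forall>u\<in>set_option L. \<not> left q (push_wall d u)) \<longleftrightarrow> (\<forall>u\<in>set_option L. \<not> left q u)"
    and "(\<forall>u\<in>set_option R. \<not> left (push_wall d u) q) \<longleftrightarrow> (\<forall>u\<in>set_option R. \<not> left u q)"
    if "dp q = Suc d" for q
    using iff[OF _ that] by (auto intro!: ball_cong)
  then show ?thesis unfolding window_def by auto
qed

lemma attach_subset_boundary:
  assumes walls: "\<forall>u\<in>set_option L \<union> set_option R. wall d u"
    and q: "q \<in> window (Suc d) L R"
  shows "attach q \<subseteq> boundary d L R \<union> {x \<in> region d L R. dp x = d}"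
proof
  fix y assume y: "y \<in> attach q"
  then obtain z where yz: "y \<in> S" "anc y q" "y \<noteq> q" "z \<in> S" "anc q z" "E z y"
    unfolding attach_def by blast
  have qV: "q \<in> V" "dp q = Suc d" "q \<noteq> r" using q depth_root unfolding window_def by auto
  have pq: "par q \<in> V" "dp (par q) = d" "anc (par q) q" using parent_in depth_parent parent_ancestor qV by auto
  have "\<not> left (par q) u" if "u \<in> set_option L" for u
    using q that left_descendants[of "par q" u q u] pq(3) ancestor_refl left_in unfolding window_def by blast
  moreover have "\<not> left u (par q)" if "u \<in> set_option R" for u
    using q that left_descendants[of u "par q" u q] pq(3) ancestor_refl left_in unfolding window_def by blast
  ultimately have p_window: "par q \<in> window d L R" unfolding window_def using pq by simp
  have y_par: "anc y (par q)" using ancestor_parent_iff[OF qV(1,3)] yz(2,3) by blast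
  show "y \<in> boundary d L R \<union> {x \<in> region d L R. dp x = d}"
  proof (cases "y = par q")
    case False
    then have "y \<in> attach (par q)"
      unfolding attach_def using yz y_par ancestor_trans[OF pq(3) yz(5)] by blast
    then show ?thesis using p_window unfolding boundary_def by blast
  next
    case True
    show ?thesis
    proof (cases "y \<in> region d L R")
      case False
      then obtain u where u: "u \<in> set_option L \<union> set_option R" "\<not> left u y" "\<not> left y u"
        using p_window True yz(1) pq(2) unfolding region_def window_def by auto
      then have "anc y u" using free_between_ancestor walls yz(1) unfolding wall_def by blast
      then show ?thesis using u(1) yz(1) True pq(2) unfolding boundary_def stem_def by blast
    qed (use True pq(2) in simp)
  qed
qed

lemma boundary_push:
  assumes walls: "\<forall>u\<in>set_option L \<union> set_option R. wall d u"
  shows "boundary (Suc d) (map_option (push_wall d) L) (map_option (push_wall d) R)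
    \<subseteq> boundary d L R \<union> {x \<in> region d L R. dp x = d}"
proof -
  have "stem (Suc d) (push_wall d u) \<subseteq> stem d u" if "u \<in> set_option L \<union> set_option R" for u
  proof -
    have "\<forall>y\<in>S. anc y (push_wall d u) \<longrightarrow> anc y u" using push_wall walls that by blast
    then show ?thesis unfolding stem_def by auto
  qed
  moreover have "attach q \<subseteq> boundary d L R \<union> {x \<in> region d L R. dp x = d}"
    if "q \<in> window (Suc d) L R" for q
    using attach_subset_boundary[OF walls that] .
  moreover have "(\<Union>u\<in>set_option (map_option (push_wall d) L) \<union> set_option (map_option (push_wall d) R).
      stem (Suc d) u) \<subseteq> (\<Union>u\<in>set_option L \<union> set_option R. stem d u)"
    using calculation(1) by auto
  ultimately show ?thesis
    unfolding boundary_def window_push[OF walls] by blast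
qed

lemma decomposable_descend:
  assumes adm: "admissible d L R" and two: "card (window (Suc d) L R) \<le> 2"
  shows "admissible (Suc d) (map_option (push_wall d) L) (map_option (push_wall d) R)"
    and "decomposable (Suc d) (map_option (push_wall d) L) (map_option (push_wall d) R) \<Longrightarrow>
      decomposable d L R"
proof -
  let ?L = "map_option (push_wall d) L" and ?R = "map_option (push_wall d) R"
  have walls: "\<forall>u\<in>set_option L \<union> set_option R. wall d u" using adm unfolding admissible_def by blast
  show "admissible (Suc d) ?L ?R"
    using push_wall walls two window_push[OF walls] unfolding admissible_def by auto
  define D where "D = {x \<in> region d L R. dp x = d}"
  have "\<forall>x\<in>region d L R. d \<le> dp x" unfolding region_def by simp
  then have split: "region d L R = D \<union> region (Suc d) ?L ?R \<union> {}"
    unfolding region_push[OF walls] D_def by auto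
  have "D \<subseteq> window d L R"
    unfolding D_def region_def window_def using S(1) left_asym by blast
  then have "card D \<le> card (window d L R)" by (rule card_mono[OF finite_window])
  then have "card D \<le> 2" using adm unfolding admissible_def by linarith
  then have card: "card (boundary d L R \<union> D) \<le> width"
    using card_boundary[OF adm] card_Un_le[of "boundary d L R" D] H_pos by simp
  assume D: "decomposable (Suc d) ?L ?R"
  show "decomposable d L R"
    unfolding decomposable_def
  proof (rule rooted_decomposable_separate[OF _ split])
    show "E y x" if "E x y" for x y using edge_sym that by blast
    show "D \<inter> region (Suc d) ?L ?R = {}" unfolding D_def region_push[OF walls] by auto
    show "D \<inter> {} = {}" "region (Suc d) ?L ?R \<inter> {} = {}" by simp_all
    show "region d L R \<inter> boundary d L R = {}" by (rule region_boundary_disjoint)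
    show "boundary (Suc d) ?L ?R \<subseteq> boundary d L R \<union> D"
      using boundary_push[OF walls] unfolding D_def .
    show "{} \<subseteq> boundary d L R \<union> D" by simp
    show "y \<in> boundary (Suc d) ?L ?R"
      if "x \<in> region (Suc d) ?L ?R" "y \<in> region d L R \<union> boundary d L R"
        "y \<notin> region (Suc d) ?L ?R" "E x y" for x y
    proof (rule boundary_edge[OF _ that(1) _ that(3,4)])
      show "\<forall>u\<in>set_option ?L \<union> set_option ?R. wall (Suc d) u" using push_wall walls by auto
      show "y \<in> S" using that(2) region_subset boundary_subset by blast
    qed
    show "y \<in> {}" if "x \<in> {}" for x y :: 'a using that by simp
    show "rooted_decomposable E (region (Suc d) ?L ?R \<union> boundary (Suc d) ?L ?R)
        (boundary (Suc d) ?L ?R) width"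
      using D unfolding decomposable_def .
    show "rooted_decomposable E ({} \<union> {}) {} width"
      using rooted_decomposable_single[of "{}" width E] by simp
  qed (fact card)
qed

lemma decomposable_leaf: "admissible d L R \<Longrightarrow> region d L R = {} \<Longrightarrow> decomposable d L R"
  using card_boundary[of d L R] rooted_decomposable_single[of "boundary d L R" width E]
  unfolding decomposable_def by simp

lemma decomposable_of_admissible: "admissible d L R \<Longrightarrow> decomposable d L R"
proof -
  obtain M where M: "\<forall>x\<in>S. dp x < M"
    using finite_nat_set_iff_bounded[of "dp ` S"] S(2) by auto
  show "admissible d L R \<Longrightarrow> decomposable d L R"
  proof (induction "M - d" arbitrary: d L R rule: less_induct)
    case (less d)
    note deeper = less.hyps
    have "decomposable d L' R'" if "admissible d L' R'" for L' R'
      using that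
    proof (induction "card (window (Suc d) L' R')" arbitrary: L' R' rule: less_induct)
      case (less L R)
      show ?case
      proof (cases "region d L R = {}")
        case False
        then obtain x where "x \<in> S" "d \<le> dp x" unfolding region_def by blast
        then have "d < M" using M by fastforce
        show ?thesis
        proof (cases "3 \<le> card (window (Suc d) L R)")
          case True
          from narrowing[OF less.prems this] obtain v where v: "wall d v"
            "\<forall>u\<in>set_option L. left u v" "\<forall>u\<in>set_option R. left v u"
            "admissible d L (Some v)" "admissible d (Some v) R"
            "card (window (Suc d) L (Some v)) < card (window (Suc d) L R)"
            "card (window (Suc d) (Some v) R) < card (window (Suc d) L R)" .
          then show ?thesis
            using decomposable_split[OF less.prems v(1-3)] less.hyps[OF v(6,4)] less.hyps[OF v(7,5)]
            by blast
        next
          case False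
          then have two: "card (window (Suc d) L R) \<le> 2" by simp
          have "M - Suc d < M - d" using \<open>d < M\<close> by simp
          then show ?thesis
            using deeper[OF _ decomposable_descend(1)[OF less.prems two]]
              decomposable_descend(2)[OF less.prems two] by blast
        qed
      qed (use decomposable_leaf less.prems in blast)
    qed
    then show ?case using less.prems by blast
  qed
qed

lemma rooted_decomposable_subset: "rooted_decomposable E S {} width"
proof -
  have window: "window 0 None None = {r}"
    unfolding window_def using depth_eq_0 depth_root root_in by auto
  have "attach r = {}" using attach_depth depth_root by fastforce
  then have "boundary 0 None None = {}" unfolding boundary_def window by simp
  moreover have "region 0 None None = S" unfolding region_def by auto
  moreover have "admissible 0 None None" unfolding admissible_def window by simp
  ultimately show ?thesis using decomposable_of_admissible unfolding decomposable_def by fastforce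
qed

end

section \<open>Treewidth bound\<close>

lemma treewidth_at_most_mono: "treewidth_at_most S E w \<Longrightarrow> w \<le> w' \<Longrightarrow> treewidth_at_most S E w'"
  unfolding treewidth_at_most_def by force

lemma floorlog_2_le: "2 \<le> n \<Longrightarrow> real (floorlog 2 n) \<le> 2 * log 2 (real n)"
proof -
  assume n: "2 \<le> n"
  then have "1 \<le> log 2 (real n)" by simp
  moreover have "real (floorlog 2 n) = real (nat \<lfloor>log 2 (real n)\<rfloor>) + 1"
    using n unfolding floorlog_def by simp
  moreover have "real (nat \<lfloor>log 2 (real n)\<rfloor>) \<le> log 2 (real n)"
    using calculation(1) by linarith
  ultimately show ?thesis by linarith
qed

lemma width_le_log:
  fixes l :: real and m B t :: nat
  assumes "1 \<le> l" "real m \<le> 2 * l"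
  shows "3 * real m * (real B + 2) + 5 + 2 * real t \<le> real (6 * (B + 2) + 5 + 2 * t) * l"
proof -
  have "3 * real m * (real B + 2) \<le> 3 * (2 * l) * (real B + 2)"
    using assms(2) by (intro mult_right_mono mult_left_mono) auto
  moreover have "5 + 2 * real t \<le> (5 + 2 * real t) * l"
    using assms(1) by (simp add: mult_le_cancel_left1)
  ultimately show ?thesis by (simp add: algebra_simps)
qed

context neat_layered_wheel
begin

lemma treewidth_subset_bound:
  assumes chain: "\<And>xs. tpath V r par xs \<Longrightarrow> \<forall>x\<in>set xs. tdegree V r par x = 2 \<Longrightarrow> length xs \<le> B"
    and upward: "\<forall>v\<in>V. \<exists>X. finite X \<and> card X \<le> t
      \<and> (\<forall>x y. E x y \<and> dp x \<noteq> dp y \<and> anc v x \<and> \<not> anc v y \<longrightarrow> y \<in> X)"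
    and S: "S \<subseteq> V" "finite S" "card S < 2 ^ m"
  shows "treewidth_at_most S E (3 * real m * (real B + 2) + 5 + 2 * real t)"
proof -
  interpret wheel_regions V r par slt E S t "m * (B + 2) + 1"
  proof (rule wheel_regions.intro[OF neat_layered_wheel_axioms wheel_regions_axioms.intro])
    show "S \<subseteq> V" "finite S" using S by simp_all
    show "\<exists>X. finite X \<and> card X \<le> t \<and> (\<forall>x y. E x y \<and> dp x \<noteq> dp y \<and> anc v x \<and> \<not> anc v y \<longrightarrow> y \<in> X)"
      if "v \<in> V" for v
      using upward that by blast
    show "\<exists>v. anc j v \<and> dp v < dp j + (m * (B + 2) + 1) \<and> (\<forall>z\<in>S. \<not> anc v z)" if j: "j \<in> V" for j
    proof -
      obtain v where "anc j v" "dp v \<le> dp j + m * (B + 2)" "\<forall>z\<in>S. \<not> anc v z"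
        using exists_free_descendant[OF chain j S(2,3)] by blast
      then show ?thesis by (intro exI[of _ v]) simp
    qed
  qed
  show ?thesis
    using treewidth_at_most_if_rooted_decomposable[OF rooted_decomposable_subset]
    by (simp add: algebra_simps)
qed

lemma treewidth_le_log:
  assumes chain: "\<And>xs. tpath V r par xs \<Longrightarrow> \<forall>x\<in>set xs. tdegree V r par x = 2 \<Longrightarrow> length xs \<le> B"
    and upward: "\<forall>v\<in>V. \<exists>X. finite X \<and> card X \<le> t
      \<and> (\<forall>x y. E x y \<and> dp x \<noteq> dp y \<and> anc v x \<and> \<not> anc v y \<longrightarrow> y \<in> X)"
    and S: "S \<subseteq> V" "finite S" "2 \<le> card S"
  shows "treewidth_at_most S E (real (6 * (B + 2) + 5 + 2 * t) / ln 2 * ln (real (card S)))"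
proof -
  let ?m = "floorlog 2 (card S)" and ?l = "log 2 (real (card S))"
  have "card S < 2 ^ ?m" using floorlog_bounds[of "card S" 2] S by simp
  then have tw: "treewidth_at_most S E (3 * real ?m * (real B + 2) + 5 + 2 * real t)"
    using treewidth_subset_bound[OF chain upward S(1,2)] by blast
  have "1 \<le> ?l" "real ?m \<le> 2 * ?l" using S floorlog_2_le by auto
  then have "3 * real ?m * (real B + 2) + 5 + 2 * real t \<le> real (6 * (B + 2) + 5 + 2 * t) * ?l"
    by (rule width_le_log)
  also have "\<dots> = real (6 * (B + 2) + 5 + 2 * t) / ln 2 * ln (real (card S))"
    by (simp add: log_def)
  finally show ?thesis using treewidth_at_most_mono[OF tw] by blast
qed

end

theorem theorem1p13:
  fixes V :: "'a set" and r :: 'a and par :: "'a \<Rightarrow> 'a"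
    and slt :: "'a \<Rightarrow> 'a \<Rightarrow> bool" and E :: "'a \<Rightarrow> 'a \<Rightarrow> bool"
  assumes "layered_wheel V r par slt E"
    and "neat V r par"
    and "upward_restricted V r par E"
  shows "\<exists>c::real. \<forall>S. S \<subseteq> V \<and> finite S \<and> card S \<ge> 2 \<longrightarrow>
           treewidth_at_most S E (c * ln (real (card S)))"
proof -
  interpret neat_layered_wheel V r par slt E using assms(1,2) by unfold_locales
  obtain B where "\<forall>xs. tpath V r par xs \<and> (\<forall>x\<in>set xs. tdegree V r par x = 2) \<longrightarrow> length xs \<le> B"
    using degree_two_paths_bounded by blast
  then have B: "\<And>xs. tpath V r par xs \<Longrightarrow> \<forall>x\<in>set xs. tdegree V r par x = 2 \<Longrightarrow> length xs \<le> B"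
    by blast
  obtain t where "\<forall>v\<in>V. \<exists>X. finite X \<and> card X \<le> t \<and> (\<forall>x\<in>X. anc x v)
      \<and> (\<forall>x y. E x y \<and> dp x \<noteq> dp y \<and> anc v x \<and> \<not> anc v y \<longrightarrow> y \<in> X)"
    using assms(3) unfolding upward_restricted_def by blast
  then have t: "\<forall>v\<in>V. \<exists>X. finite X \<and> card X \<le> t
      \<and> (\<forall>x y. E x y \<and> dp x \<noteq> dp y \<and> anc v x \<and> \<not> anc v y \<longrightarrow> y \<in> X)"
    by blast
  show ?thesis
  proof (intro exI allI impI)
    fix S assume S: "S \<subseteq> V \<and> finite S \<and> 2 \<le> card S"
    show "treewidth_at_most S E (real (6 * (B + 2) + 5 + 2 * t) / ln 2 * ln (real (card S)))"
      by (rule treewidth_le_log[OF B t]) (use S in simp_all)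
  qed
qed

end
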